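(* Let $M^n\subset\mathbb{R}^{n+1}$ be a hypersurface such that for every $x\in M$ there is an orthonormal basis $\{e_1,\dots,e_n\}$ of $T_xM$ consisting of principal vectors of $M$ at $x$ with $$\sum_{j=1}^n \nabla_jh_{jj}\,\nabla_jH\le\frac{n+1}{2n}|\nabla H|^2 .$$ Then, wherever $|\mathring A|\neq0$, $$|\nabla\mathring A|^2\ge\Big(1+\frac1n\Big)|\nabla|\mathring A||^2 .$$
   Context: For a hypersurface with unit normal $\nu$: $D$ is the Euclidean connection, $h(X,Y)=\langle D_XY,\nu\rangle$, $AX=-D_X\nu$, $H=\operatorname{tr}A$, and $\mathring A=A-\frac Hn I$ is the traceless part of $A$ (with associated bilinear form $\mathring h=h-\frac Hn g$). $\nabla$ is the Levi-Civita connection of the induced metric $g$; $\nabla_jh_{jj}=(\nabla_{e_j}h)(e_j,e_j)$, $\nabla_jH=e_j(H)$. Principal vectors are eigenvectors of $A$. *)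

theory Defs
  imports "HOL-Analysis.Analysis"
begin

text \<open>Local model of a hypersurface: a smooth immersion X of an open set U of R^n
 (coordinates indexed by the finite type 'n, n = CARD('n)) into R^(n+1)
 (indexed by 'm with CARD('m) = n+1), together with a smooth unit normal field nu.
 Tangent vectors at x are written in the coordinate frame: v :: real^'n stands for
 sum_i v_i (d_i X)(x).\<close>

definition pd :: "'n::finite \<Rightarrow> (real^'n \<Rightarrow> 'b::real_normed_vector) \<Rightarrow> real^'n \<Rightarrow> 'b" where
  "pd i f x = frechet_derivative f (at x) (axis i 1)"

fun Ck :: "nat \<Rightarrow> (real^'n::finite) set \<Rightarrow> (real^'n \<Rightarrow> 'b::real_normed_vector) \<Rightarrow> bool" where
  "Ck 0 U f = continuous_on U f"
| "Ck (Suc k) U f = (f differentiable_on U \<and> (\<forall>i. Ck k U (pd i f)))"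

definition smooth_on :: "(real^'n::finite) set \<Rightarrow> (real^'n \<Rightarrow> 'b::real_normed_vector) \<Rightarrow> bool" where
  "smooth_on U f = (\<forall>k. Ck k U f)"

definition hypersurface_patch ::
  "(real^'n::finite) set \<Rightarrow> (real^'n \<Rightarrow> real^'m::finite) \<Rightarrow> (real^'n \<Rightarrow> real^'m) \<Rightarrow> bool" where
  "hypersurface_patch U X \<nu> \<longleftrightarrow> open U \<and> CARD('m) = CARD('n) + 1 \<and>
     smooth_on U X \<and> smooth_on U \<nu> \<and>
     (\<forall>x\<in>U. X differentiable (at x) \<and> inj (frechet_derivative X (at x))) \<and>
     (\<forall>x\<in>U. norm (\<nu> x) = 1 \<and> (\<forall>i. \<nu> x \<bullet> pd i X x = 0))"

definition gm :: "(real^'n::finite \<Rightarrow> real^'m::finite) \<Rightarrow> real^'n \<Rightarrow> real^'n^'n" where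
  "gm X x = (\<chi> i j. pd i X x \<bullet> pd j X x)"

definition ginv :: "(real^'n::finite \<Rightarrow> real^'m::finite) \<Rightarrow> real^'n \<Rightarrow> real^'n^'n" where
  "ginv X x = matrix_inv (gm X x)"

definition hh :: "(real^'n::finite \<Rightarrow> real^'m::finite) \<Rightarrow> (real^'n \<Rightarrow> real^'m) \<Rightarrow> real^'n \<Rightarrow> real^'n^'n" where
  "hh X \<nu> x = (\<chi> i j. pd i (pd j X) x \<bullet> \<nu> x)"

text \<open>Shape operator A (A X = - D_X nu) as the matrix (A $ j $ i) = A^j_i:
  - d_i nu = sum_j A^j_i d_j X, the tangential components being computed with g^{-1}.\<close>
definition shapeA :: "(real^'n::finite \<Rightarrow> real^'m::finite) \<Rightarrow> (real^'n \<Rightarrow> real^'m) \<Rightarrow> real^'n \<Rightarrow> real^'n^'n" where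
  "shapeA X \<nu> x = (\<chi> j i. - (\<Sum>k\<in>UNIV. ginv X x $ j $ k * (pd i \<nu> x \<bullet> pd k X x)))"

definition meanH :: "(real^'n::finite \<Rightarrow> real^'m::finite) \<Rightarrow> (real^'n \<Rightarrow> real^'m) \<Rightarrow> real^'n \<Rightarrow> real" where
  "meanH X \<nu> x = (\<Sum>i\<in>UNIV. shapeA X \<nu> x $ i $ i)"

definition hcirc :: "(real^'n::finite \<Rightarrow> real^'m::finite) \<Rightarrow> (real^'n \<Rightarrow> real^'m) \<Rightarrow> real^'n \<Rightarrow> real^'n^'n" where
  "hcirc X \<nu> x = (\<chi> i j. hh X \<nu> x $ i $ j - (meanH X \<nu> x / real CARD('n)) * gm X x $ i $ j)"

definition christ :: "(real^'n::finite \<Rightarrow> real^'m::finite) \<Rightarrow> real^'n \<Rightarrow> 'n \<Rightarrow> 'n \<Rightarrow> 'n \<Rightarrow> real" where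
  "christ X x l i j = (1/2) * (\<Sum>m\<in>UNIV. ginv X x $ l $ m *
      (pd i (\<lambda>y. gm X y $ j $ m) x + pd j (\<lambda>y. gm X y $ i $ m) x - pd m (\<lambda>y. gm X y $ i $ j) x))"

definition cov2 :: "(real^'n::finite \<Rightarrow> real^'m::finite) \<Rightarrow> (real^'n \<Rightarrow> real^'n^'n) \<Rightarrow> real^'n \<Rightarrow> 'n \<Rightarrow> 'n \<Rightarrow> 'n \<Rightarrow> real" where
  "cov2 X T x k i j = pd k (\<lambda>y. T y $ i $ j) x
      - (\<Sum>l\<in>UNIV. christ X x l k i * T x $ l $ j)
      - (\<Sum>l\<in>UNIV. christ X x l k j * T x $ i $ l)"

definition tnorm2 :: "(real^'n::finite \<Rightarrow> real^'m::finite) \<Rightarrow> real^'n \<Rightarrow> real^'n^'n \<Rightarrow> real" where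
  "tnorm2 X x T = (\<Sum>i\<in>UNIV. \<Sum>i'\<in>UNIV. \<Sum>j\<in>UNIV. \<Sum>j'\<in>UNIV.
      ginv X x $ i $ i' * ginv X x $ j $ j' * T $ i $ j * T $ i' $ j')"

definition t3norm2 :: "(real^'n::finite \<Rightarrow> real^'m::finite) \<Rightarrow> real^'n \<Rightarrow> ('n \<Rightarrow> 'n \<Rightarrow> 'n \<Rightarrow> real) \<Rightarrow> real" where
  "t3norm2 X x S = (\<Sum>k\<in>UNIV. \<Sum>k'\<in>UNIV. \<Sum>i\<in>UNIV. \<Sum>i'\<in>UNIV. \<Sum>j\<in>UNIV. \<Sum>j'\<in>UNIV.
      ginv X x $ k $ k' * ginv X x $ i $ i' * ginv X x $ j $ j' * S k i j * S k' i' j')"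

definition gradnorm2 :: "(real^'n::finite \<Rightarrow> real^'m::finite) \<Rightarrow> (real^'n \<Rightarrow> real) \<Rightarrow> real^'n \<Rightarrow> real" where
  "gradnorm2 X f x = (\<Sum>i\<in>UNIV. \<Sum>j\<in>UNIV. ginv X x $ i $ j * pd i f x * pd j f x)"

definition normAcirc :: "(real^'n::finite \<Rightarrow> real^'m::finite) \<Rightarrow> (real^'n \<Rightarrow> real^'m) \<Rightarrow> real^'n \<Rightarrow> real" where
  "normAcirc X \<nu> x = sqrt (tnorm2 X x (hcirc X \<nu> x))"

text \<open>g-orthonormal family of CARD('n) tangent vectors (hence an orthonormal basis of T_xM).\<close>
definition g_orthonormal :: "(real^'n::finite \<Rightarrow> real^'m::finite) \<Rightarrow> real^'n \<Rightarrow> ('n \<Rightarrow> real^'n) \<Rightarrow> bool" where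
  "g_orthonormal X x e \<longleftrightarrow> (\<forall>a b. (e a) \<bullet> (gm X x *v e b) = (if a = b then 1 else 0))"

definition principal_vector :: "(real^'n::finite \<Rightarrow> real^'m::finite) \<Rightarrow> (real^'n \<Rightarrow> real^'m) \<Rightarrow> real^'n \<Rightarrow> real^'n \<Rightarrow> bool" where
  "principal_vector X \<nu> x v \<longleftrightarrow> v \<noteq> 0 \<and> (\<exists>c::real. shapeA X \<nu> x *v v = c *\<^sub>R v)"

definition nabla_h_eee :: "(real^'n::finite \<Rightarrow> real^'m::finite) \<Rightarrow> (real^'n \<Rightarrow> real^'m) \<Rightarrow> real^'n \<Rightarrow> real^'n \<Rightarrow> real" where
  "nabla_h_eee X \<nu> x e = (\<Sum>k\<in>UNIV. \<Sum>i\<in>UNIV. \<Sum>j\<in>UNIV. e $ k * e $ i * e $ j * cov2 X (hh X \<nu>) x k i j)"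

definition dir_deriv :: "real^'n::finite \<Rightarrow> (real^'n \<Rightarrow> real) \<Rightarrow> real^'n \<Rightarrow> real" where
  "dir_deriv e f x = (\<Sum>k\<in>UNIV. e $ k * pd k f x)"

end

theory Submission
  imports Defs
begin

(* At a point with \<mathring>A \<noteq> 0 we work in a g-orthonormal frame of principal
   vectors.  There \<nabla>h becomes a totally symmetric array S\<^sub>a\<^sub>b\<^sub>c (Codazzi), \<nabla>H its trace
   K\<^sub>a = \<Sum>\<^sub>b S\<^sub>a\<^sub>b\<^sub>b, \<mathring>h the diagonal matrix of \<mu>\<^sub>b = \<lambda>\<^sub>b - H/n, and both sides of the inequality
   become explicit sums.  The inequality then follows from Cauchy-Schwarz, a lower bound
   for the norm of a symmetric 3-tensor by its entries with two equal indices, and an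
   elementary estimate for each row S\<^sub>a\<^sub>.\<^sub>., summed over a using the hypothesis. *)

text \<open>For reals with \<open>n \<ge> 1\<close>,
  \<open>y \<ge> 0\<close> the sum of squares of the off-diagonal entries of a row, \<open>s\<close> their sum
  (so \<open>s\<^sup>2 \<le> n y\<close>), \<open>q\<close> the diagonal entry and \<open>q + s\<close> the row trace.\<close>
lemma kato_row_estimate:
  fixes n q y s :: real
  assumes n: "n \<ge> 1" and s: "s\<^sup>2 \<le> n * y"
  shows "(1 + 1/n) * (q\<^sup>2 + y - (q + s)\<^sup>2 / n) + 2/n * ((n + 1) / (2 * n) * (q + s)\<^sup>2 - q * (q + s))
     \<le> (q\<^sup>2 + y - (q + s)\<^sup>2 / n) + 2 * y"
proof -
  have y: "s\<^sup>2 / n \<le> y" using s n by (simp add: divide_le_eq mult.commute)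
  have "0 \<le> s\<^sup>2 / n" using n by simp
  with y have "0 \<le> y" by linarith
  then have "0 \<le> (1 - 1/n) * y" using n by (intro mult_nonneg_nonneg) (auto simp: field_simps)
  moreover have "(q\<^sup>2 + y - (q + s)\<^sup>2 / n) + 2 * y
      - ((1 + 1/n) * (q\<^sup>2 + y - (q + s)\<^sup>2 / n) + 2/n * ((n + 1) / (2 * n) * (q + s)\<^sup>2 - q * (q + s)))
      = (2 - 1/n) * y - s\<^sup>2 / n"
    using n by (simp add: field_simps power2_eq_square)
  ultimately show ?thesis using y by (simp add: algebra_simps)
qed

lemma sum_sq_deviation_from_mean:
  fixes x :: "'n::finite \<Rightarrow> real"
  defines "n \<equiv> real CARD('n)"
  assumes K: "K = (\<Sum>b\<in>UNIV. x b)"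
  shows "(\<Sum>b\<in>UNIV. (x b - K / n)\<^sup>2) = (\<Sum>b\<in>UNIV. (x b)\<^sup>2) - K\<^sup>2 / n"
proof -
  have "(\<Sum>b\<in>UNIV. (x b - K / n)\<^sup>2) = (\<Sum>b\<in>UNIV. (x b)\<^sup>2) - 2 * (K / n) * K + n * (K / n)\<^sup>2"
    by (simp add: power2_diff sum.distrib sum_subtractf K n_def mult.assoc flip: sum_distrib_left sum_distrib_right sum_divide_distrib)
  also have "\<dots> = (\<Sum>b\<in>UNIV. (x b)\<^sup>2) - K\<^sup>2 / n"
    by (simp add: n_def field_simps power2_eq_square)
  finally show ?thesis .
qed

lemma offdiag_sum_sq_bound:
  fixes x :: "'n::finite \<Rightarrow> real"
  shows "(\<Sum>b\<in>UNIV - {a}. x b)\<^sup>2 \<le> real CARD('n) * (\<Sum>b\<in>UNIV - {a}. (x b)\<^sup>2)"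
proof -
  have "(\<Sum>b\<in>UNIV - {a}. x b)\<^sup>2 \<le> (\<Sum>b\<in>UNIV - {a}. (x b)\<^sup>2) * card (UNIV - {a})"
    by (rule sum_squared_le_sum_of_squares)
  also have "\<dots> \<le> (\<Sum>b\<in>UNIV - {a}. (x b)\<^sup>2) * CARD('n)"
    by (intro mult_left_mono sum_nonneg) (auto intro: card_mono)
  finally show ?thesis by (simp add: mult.commute)
qed

text \<open>The row estimate for one row \<open>x\<^sub>b = S\<^sub>a\<^sub>b\<^sub>b\<close> of a symmetric 3-tensor, with trace
  \<open>K = \<Sum>\<^sub>b x\<^sub>b\<close> and diagonal entry \<open>x\<^sub>a\<close>.\<close>
lemma kato_row_bound:
  fixes x :: "'n::finite \<Rightarrow> real"
  defines "n \<equiv> real CARD('n)" and "K \<equiv> (\<Sum>b\<in>UNIV. x b)"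
  shows "(1 + 1/n) * (\<Sum>b\<in>UNIV. (x b - K / n)\<^sup>2) + 2/n * ((n + 1) / (2 * n) * K\<^sup>2 - x a * K)
     \<le> (\<Sum>b\<in>UNIV. (x b - K / n)\<^sup>2) + 2 * (\<Sum>b\<in>UNIV - {a}. (x b)\<^sup>2)"
proof -
  have n: "n \<ge> 1" by (simp add: n_def Suc_le_eq)
  have "(\<Sum>b\<in>UNIV. (x b - K / n)\<^sup>2)
      = (x a)\<^sup>2 + (\<Sum>b\<in>UNIV - {a}. (x b)\<^sup>2) - (x a + (\<Sum>b\<in>UNIV - {a}. x b))\<^sup>2 / n"
    and "K = x a + (\<Sum>b\<in>UNIV - {a}. x b)"
    using sum_sq_deviation_from_mean[where x = x and K = K, OF K_def[THEN meta_eq_to_obj_eq]]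
    by (simp_all add: K_def n_def sum.remove[of UNIV a])
  then show ?thesis
    using kato_row_estimate[OF n offdiag_sum_sq_bound[of x a, folded n_def]] by simp
qed

lemma sum_if_neq: "(\<Sum>b\<in>UNIV. if b \<noteq> a then g b else 0) = (\<Sum>b\<in>UNIV - {a}. g b)"
  for g :: "'n::finite \<Rightarrow> real"
  by (auto simp: sum.If_cases intro!: sum.cong)

text \<open>Two reindexings of off-diagonal triple sums, used to collect the entries of a
  symmetric 3-tensor with exactly two equal indices.\<close>
lemma offdiagonal_reindex_first:
  fixes g :: "'n::finite \<Rightarrow> 'n \<Rightarrow> real"
  shows "(\<Sum>a\<in>UNIV. \<Sum>b\<in>UNIV. \<Sum>d\<in>UNIV. if b \<noteq> d \<and> b = a then g d a else 0)
      = (\<Sum>a\<in>UNIV. \<Sum>b\<in>UNIV. if b \<noteq> a then g a b else 0)"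
proof -
  have "(\<Sum>b\<in>UNIV. \<Sum>d\<in>UNIV. if b \<noteq> d \<and> b = a then g d a else 0)
      = (\<Sum>b\<in>UNIV. if b = a then (\<Sum>d\<in>UNIV. if a \<noteq> d then g d a else 0) else 0)" for a
    by (intro sum.cong) auto
  then have "(\<Sum>a\<in>UNIV. \<Sum>b\<in>UNIV. \<Sum>d\<in>UNIV. if b \<noteq> d \<and> b = a then g d a else 0)
      = (\<Sum>a\<in>UNIV. \<Sum>d\<in>UNIV. if a \<noteq> d then g d a else 0)"
    by simp
  also have "\<dots> = (\<Sum>a\<in>UNIV. \<Sum>b\<in>UNIV. if b \<noteq> a then g a b else 0)"
    by (rule sum.swap)
  finally show ?thesis .
qed

lemma offdiagonal_reindex_second:
  fixes g :: "'n::finite \<Rightarrow> 'n \<Rightarrow> real"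
  shows "(\<Sum>a\<in>UNIV. \<Sum>b\<in>UNIV. \<Sum>d\<in>UNIV. if b \<noteq> d \<and> d = a then g b a else 0)
      = (\<Sum>a\<in>UNIV. \<Sum>b\<in>UNIV. if b \<noteq> a then g a b else 0)"
proof -
  have "(\<Sum>d\<in>UNIV. if b \<noteq> d \<and> d = a then g b a else 0)
      = (\<Sum>d\<in>UNIV. if d = a then (if a \<noteq> b then g b a else 0) else 0)" for a b
    by (rule sum.cong) auto
  then have "(\<Sum>a\<in>UNIV. \<Sum>b\<in>UNIV. \<Sum>d\<in>UNIV. if b \<noteq> d \<and> d = a then g b a else 0)
      = (\<Sum>a\<in>UNIV. \<Sum>b\<in>UNIV. if a \<noteq> b then g b a else 0)"
    by simp
  also have "\<dots> = (\<Sum>a\<in>UNIV. \<Sum>b\<in>UNIV. if b \<noteq> a then g a b else 0)"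
    by (rule sum.swap)
  finally show ?thesis .
qed

text \<open>For a totally symmetric 3-tensor \<open>S\<close> and any \<open>c\<close>, the squared norm of
  \<open>S\<^sub>a\<^sub>b\<^sub>d - \<delta>\<^sub>b\<^sub>d c\<^sub>a\<close> is at least the contribution of the entries with \<open>b = d\<close> plus
  that of the entries \<open>S\<^sub>b\<^sub>a\<^sub>d\<close>, \<open>S\<^sub>b\<^sub>d\<^sub>a\<close> (\<open>d \<noteq> a\<close>), which both equal \<open>S\<^sub>a\<^sub>d\<^sub>d\<close> by symmetry.\<close>
lemma symmetric_tensor_lower_bound:
  fixes S :: "'n::finite \<Rightarrow> 'n \<Rightarrow> 'n \<Rightarrow> real" and c :: "'n \<Rightarrow> real"
  assumes s1: "\<And>a b d. S a b d = S b a d" and s2: "\<And>a b d. S a b d = S a d b"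
  shows "(\<Sum>a\<in>UNIV. \<Sum>b\<in>UNIV. (S a b b - c a)\<^sup>2) + 2 * (\<Sum>a\<in>UNIV. \<Sum>b\<in>UNIV. if b \<noteq> a then (S a b b)\<^sup>2 else 0)
     \<le> (\<Sum>a\<in>UNIV. \<Sum>b\<in>UNIV. \<Sum>d\<in>UNIV. (S a b d - (if b = d then c a else 0))\<^sup>2)"
proof -
  define f where "f a b d = S a b d - (if b = d then c a else 0)" for a b d
  have pointwise: "(if b = d then (f a b d)\<^sup>2 else 0) + (if b \<noteq> d \<and> b = a then (S d a a)\<^sup>2 else 0)
      + (if b \<noteq> d \<and> d = a then (S b a a)\<^sup>2 else 0) \<le> (f a b d)\<^sup>2" for a b d
  proof -
    have "S a a d = S d a a" using s2[of a a d] s1[of a d a] by simp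
    moreover have "S a b a = S b a a" by (rule s1)
    ultimately show ?thesis by (cases "b = d"; cases "b = a"; cases "d = a") (simp_all add: f_def)
  qed
  have diagonal: "(\<Sum>a\<in>UNIV. \<Sum>b\<in>UNIV. \<Sum>d\<in>UNIV. if b = d then (f a b d)\<^sup>2 else 0)
      = (\<Sum>a\<in>UNIV. \<Sum>b\<in>UNIV. (S a b b - c a)\<^sup>2)"
    by (simp add: f_def)
  have first_offdiagonal: "(\<Sum>a\<in>UNIV. \<Sum>b\<in>UNIV. \<Sum>d\<in>UNIV. if b \<noteq> d \<and> b = a then (S d a a)\<^sup>2 else 0)
      = (\<Sum>a\<in>UNIV. \<Sum>b\<in>UNIV. if b \<noteq> a then (S a b b)\<^sup>2 else 0)"
    by (rule offdiagonal_reindex_first)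
  have second_offdiagonal: "(\<Sum>a\<in>UNIV. \<Sum>b\<in>UNIV. \<Sum>d\<in>UNIV. if b \<noteq> d \<and> d = a then (S b a a)\<^sup>2 else 0)
      = (\<Sum>a\<in>UNIV. \<Sum>b\<in>UNIV. if b \<noteq> a then (S a b b)\<^sup>2 else 0)"
    by (rule offdiagonal_reindex_second)
  have "(\<Sum>a\<in>UNIV. \<Sum>b\<in>UNIV. \<Sum>d\<in>UNIV. (if b = d then (f a b d)\<^sup>2 else 0)
      + (if b \<noteq> d \<and> b = a then (S d a a)\<^sup>2 else 0) + (if b \<noteq> d \<and> d = a then (S b a a)\<^sup>2 else 0))
      \<le> (\<Sum>a\<in>UNIV. \<Sum>b\<in>UNIV. \<Sum>d\<in>UNIV. (f a b d)\<^sup>2)"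
    by (intro sum_mono pointwise)
  then show ?thesis
    by (simp only: sum.distrib diagonal first_offdiagonal second_offdiagonal f_def) simp
qed

text \<open>The algebraic Kato inequality in an orthonormal frame.  \<open>S\<^sub>a\<^sub>b\<^sub>c\<close> plays the role of the
  totally symmetric tensor \<open>\<nabla>h\<close>, \<open>K\<^sub>a = \<nabla>\<^sub>aH\<close> its trace, \<open>\<mu>\<^sub>b\<close> the principal curvatures of the
  traceless second fundamental form; the left side is \<open>(1 + 1/n) |\<nabla>|\<mathring>A||\<^sup>2\<close>, the right
  side \<open>|\<nabla>\<mathring>A|\<^sup>2\<close>, and \<open>hyp\<close> is the hypothesis of the theorem.\<close>
lemma kato_frame_inequality:
  fixes S :: "'n::finite \<Rightarrow> 'n \<Rightarrow> 'n \<Rightarrow> real" and \<mu> K :: "'n \<Rightarrow> real"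
  defines "n \<equiv> real CARD('n)"
  assumes s1: "\<And>a b c. S a b c = S b a c" and s2: "\<And>a b c. S a b c = S a c b"
    and K: "\<And>a. K a = (\<Sum>b\<in>UNIV. S a b b)"
    and mu_pos: "(\<Sum>b\<in>UNIV. (\<mu> b)\<^sup>2) > 0"
    and hyp: "(\<Sum>a\<in>UNIV. S a a a * K a) \<le> (n + 1) / (2 * n) * (\<Sum>a\<in>UNIV. (K a)\<^sup>2)"
  shows "(1 + 1 / n) * ((\<Sum>a\<in>UNIV. (\<Sum>b\<in>UNIV. (S a b b - K a / n) * \<mu> b)\<^sup>2) / (\<Sum>b\<in>UNIV. (\<mu> b)\<^sup>2))
     \<le> (\<Sum>a\<in>UNIV. \<Sum>b\<in>UNIV. \<Sum>c\<in>UNIV. (S a b c - (if b = c then K a / n else 0))\<^sup>2)"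
proof -
  define M where "M = (\<Sum>b\<in>UNIV. (\<mu> b)\<^sup>2)"
  define V where "V a = (\<Sum>b\<in>UNIV. (S a b b - K a / n)\<^sup>2)" for a
  define y where "y a = (\<Sum>b\<in>UNIV - {a}. (S a b b)\<^sup>2)" for a
  have n: "n \<ge> 1" by (simp add: n_def Suc_le_eq)
  have cauchy_schwarz: "(\<Sum>b\<in>UNIV. (S a b b - K a / n) * \<mu> b)\<^sup>2 / M \<le> V a" for a
    using Cauchy_Schwarz_ineq_sum[of "\<lambda>b. S a b b - K a / n" \<mu> UNIV] mu_pos
    by (simp add: M_def V_def divide_le_eq)
  have row_estimate: "(1 + 1/n) * V a + 2/n * ((n + 1) / (2 * n) * (K a)\<^sup>2 - S a a a * K a) \<le> V a + 2 * y a"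
    for a using kato_row_bound[of "\<lambda>b. S a b b" a] by (simp add: V_def y_def K n_def)
  have "(1 + 1 / n) * ((\<Sum>a\<in>UNIV. (\<Sum>b\<in>UNIV. (S a b b - K a / n) * \<mu> b)\<^sup>2) / M)
      \<le> (1 + 1/n) * (\<Sum>a\<in>UNIV. V a)"
    using n cauchy_schwarz by (intro mult_left_mono) (auto simp: sum_divide_distrib intro: sum_mono)
  also have "\<dots> \<le> (1 + 1/n) * (\<Sum>a\<in>UNIV. V a)
      + 2/n * ((n + 1) / (2 * n) * (\<Sum>a\<in>UNIV. (K a)\<^sup>2) - (\<Sum>a\<in>UNIV. S a a a * K a))"
  proof -
    have "0 \<le> 2/n * ((n + 1) / (2 * n) * (\<Sum>a\<in>UNIV. (K a)\<^sup>2) - (\<Sum>a\<in>UNIV. S a a a * K a))"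
      using hyp n by (intro mult_nonneg_nonneg) simp_all
    then show ?thesis by linarith
  qed
  also have "\<dots> = (\<Sum>a\<in>UNIV. (1 + 1/n) * V a + 2/n * ((n + 1) / (2 * n) * (K a)\<^sup>2 - S a a a * K a))"
    by (simp add: sum.distrib sum_subtractf flip: sum_distrib_left sum_divide_distrib)
  also have "\<dots> \<le> (\<Sum>a\<in>UNIV. V a + 2 * y a)"
    by (intro sum_mono row_estimate)
  also have "\<dots> \<le> (\<Sum>a\<in>UNIV. \<Sum>b\<in>UNIV. \<Sum>c\<in>UNIV. (S a b c - (if b = c then K a / n else 0))\<^sup>2)"
    using symmetric_tensor_lower_bound[OF s1 s2, where c = "\<lambda>a. K a / n"]
    by (simp add: V_def y_def sum.distrib sum_distrib_left sum_if_neq)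
  finally show ?thesis by (simp add: M_def)
qed

text \<open>Components of bilinear forms and 3-tensors with respect to a frame whose vectors
  have coordinates \<open>E i a\<close> (the \<open>i\<close>-th coordinate of the \<open>a\<close>-th frame vector).\<close>
definition frame2 :: "('n::finite \<Rightarrow> 'n \<Rightarrow> real) \<Rightarrow> ('n \<Rightarrow> 'n \<Rightarrow> real) \<Rightarrow> 'n \<Rightarrow> 'n \<Rightarrow> real" where
  "frame2 E P a b = (\<Sum>i\<in>UNIV. \<Sum>j\<in>UNIV. E i a * E j b * P i j)"

definition frame3 :: "('n::finite \<Rightarrow> 'n \<Rightarrow> real) \<Rightarrow> ('n \<Rightarrow> 'n \<Rightarrow> 'n \<Rightarrow> real) \<Rightarrow> 'n \<Rightarrow> 'n \<Rightarrow> 'n \<Rightarrow> real" where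
  "frame3 E S a b c = (\<Sum>k\<in>UNIV. \<Sum>i\<in>UNIV. \<Sum>j\<in>UNIV. E k a * E i b * E j c * S k i j)"

lemma frame2_diff: "frame2 E (\<lambda>i j. P i j - c * Q i j) a b = frame2 E P a b - c * frame2 E Q a b"
  by (simp add: frame2_def algebra_simps sum_subtractf sum_distrib_left)

lemma frame3_swap12:
  assumes "\<And>a b c. S a b c = S b a c"
  shows "frame3 E S b a c = frame3 E S a b c"
proof -
  have "frame3 E S b a c = (\<Sum>i\<in>UNIV. \<Sum>k\<in>UNIV. \<Sum>j\<in>UNIV. E k b * E i a * E j c * S k i j)"
    unfolding frame3_def by (rule sum.swap)
  also have "\<dots> = frame3 E S a b c"
    unfolding frame3_def by (intro sum.cong refl) (subst assms, simp add: mult_ac)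
  finally show ?thesis .
qed

lemma frame3_swap23:
  assumes "\<And>a b c. S a b c = S a c b"
  shows "frame3 E S a c b = frame3 E S a b c"
proof -
  have "frame3 E S a c b = (\<Sum>k\<in>UNIV. \<Sum>j\<in>UNIV. \<Sum>i\<in>UNIV. E k a * E i c * E j b * S k i j)"
    unfolding frame3_def by (rule sum.cong[OF refl], rule sum.swap)
  also have "\<dots> = frame3 E S a b c"
    unfolding frame3_def by (intro sum.cong refl) (subst assms, simp add: mult_ac)
  finally show ?thesis .
qed

text \<open>If the inverse metric is \<open>g\<^sup>i\<^sup>j = \<Sum>\<^sub>a E\<^sup>i\<^sub>a E\<^sup>j\<^sub>a\<close>, i.e. the frame is orthonormal, then all
  contractions with \<open>g\<^sup>i\<^sup>j\<close> become plain sums of frame components.\<close>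
lemma inverse_metric_bilinear:
  fixes E g :: "'n::finite \<Rightarrow> 'n \<Rightarrow> real"
  assumes g: "\<And>i j. g i j = (\<Sum>a\<in>UNIV. E i a * E j a)"
  shows "(\<Sum>i\<in>UNIV. \<Sum>j\<in>UNIV. g i j * (u i * v j))
       = (\<Sum>a\<in>UNIV. (\<Sum>i\<in>UNIV. E i a * u i) * (\<Sum>j\<in>UNIV. E j a * v j))"
proof -
  have "(\<Sum>a\<in>UNIV. (\<Sum>i\<in>UNIV. E i a * u i) * (\<Sum>j\<in>UNIV. E j a * v j))
      = (\<Sum>a\<in>UNIV. \<Sum>i\<in>UNIV. \<Sum>j\<in>UNIV. E i a * E j a * (u i * v j))"
    by (simp add: sum_product mult_ac)
  also have "\<dots> = (\<Sum>i\<in>UNIV. \<Sum>a\<in>UNIV. \<Sum>j\<in>UNIV. E i a * E j a * (u i * v j))"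
    by (rule sum.swap)
  also have "\<dots> = (\<Sum>i\<in>UNIV. \<Sum>j\<in>UNIV. \<Sum>a\<in>UNIV. E i a * E j a * (u i * v j))"
    by (rule sum.cong[OF refl], rule sum.swap)
  also have "\<dots> = (\<Sum>i\<in>UNIV. \<Sum>j\<in>UNIV. g i j * (u i * v j))"
    by (simp add: g sum_distrib_right)
  finally show ?thesis by simp
qed

lemma inverse_metric_trace:
  fixes E g :: "'n::finite \<Rightarrow> 'n \<Rightarrow> real"
  assumes g: "\<And>i j. g i j = (\<Sum>a\<in>UNIV. E i a * E j a)"
  shows "(\<Sum>i\<in>UNIV. \<Sum>j\<in>UNIV. g i j * P i j) = (\<Sum>a\<in>UNIV. frame2 E P a a)"
proof -
  have "(\<Sum>i\<in>UNIV. \<Sum>j\<in>UNIV. g i j * P i j) = (\<Sum>i\<in>UNIV. \<Sum>j\<in>UNIV. \<Sum>a\<in>UNIV. E i a * E j a * P i j)"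
    by (simp add: g sum_distrib_right)
  also have "\<dots> = (\<Sum>i\<in>UNIV. \<Sum>a\<in>UNIV. \<Sum>j\<in>UNIV. E i a * E j a * P i j)"
    by (rule sum.cong[OF refl], rule sum.swap)
  also have "\<dots> = (\<Sum>a\<in>UNIV. frame2 E P a a)"
    unfolding frame2_def by (rule sum.swap)
  finally show ?thesis .
qed

lemma inverse_metric_norm2:
  fixes E g :: "'n::finite \<Rightarrow> 'n \<Rightarrow> real"
  assumes g: "\<And>i j. g i j = (\<Sum>a\<in>UNIV. E i a * E j a)"
  shows "(\<Sum>i\<in>UNIV. \<Sum>i'\<in>UNIV. \<Sum>j\<in>UNIV. \<Sum>j'\<in>UNIV. g i i' * g j j' * P i j * Q i' j')
     = (\<Sum>a\<in>UNIV. \<Sum>b\<in>UNIV. frame2 E P a b * frame2 E Q a b)"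
proof -
  define p where "p i b = (\<Sum>j\<in>UNIV. E j b * P i j)" for i b
  define q where "q i b = (\<Sum>j\<in>UNIV. E j b * Q i j)" for i b
  have "(\<Sum>i\<in>UNIV. \<Sum>i'\<in>UNIV. \<Sum>j\<in>UNIV. \<Sum>j'\<in>UNIV. g i i' * g j j' * P i j * Q i' j')
     = (\<Sum>i\<in>UNIV. \<Sum>i'\<in>UNIV. g i i' * (\<Sum>j\<in>UNIV. \<Sum>j'\<in>UNIV. g j j' * (P i j * Q i' j')))"
    by (simp add: sum_distrib_left mult_ac)
  also have "\<dots> = (\<Sum>i\<in>UNIV. \<Sum>i'\<in>UNIV. \<Sum>b\<in>UNIV. g i i' * (p i b * q i' b))"
    by (simp add: inverse_metric_bilinear[OF g] p_def q_def sum_distrib_left)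
  also have "\<dots> = (\<Sum>i\<in>UNIV. \<Sum>b\<in>UNIV. \<Sum>i'\<in>UNIV. g i i' * (p i b * q i' b))"
    by (rule sum.cong[OF refl], rule sum.swap)
  also have "\<dots> = (\<Sum>b\<in>UNIV. \<Sum>i\<in>UNIV. \<Sum>i'\<in>UNIV. g i i' * (p i b * q i' b))"
    by (rule sum.swap)
  also have "\<dots> = (\<Sum>b\<in>UNIV. \<Sum>a\<in>UNIV. (\<Sum>i\<in>UNIV. E i a * p i b) * (\<Sum>i'\<in>UNIV. E i' a * q i' b))"
    by (simp add: inverse_metric_bilinear[OF g])
  also have "\<dots> = (\<Sum>a\<in>UNIV. \<Sum>b\<in>UNIV. (\<Sum>i\<in>UNIV. E i a * p i b) * (\<Sum>i'\<in>UNIV. E i' a * q i' b))"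
    by (rule sum.swap)
  also have "\<dots> = (\<Sum>a\<in>UNIV. \<Sum>b\<in>UNIV. frame2 E P a b * frame2 E Q a b)"
    by (simp add: frame2_def p_def q_def sum_distrib_left mult_ac)
  finally show ?thesis .
qed

lemma inverse_metric_norm3:
  fixes E g :: "'n::finite \<Rightarrow> 'n \<Rightarrow> real"
  assumes g: "\<And>i j. g i j = (\<Sum>a\<in>UNIV. E i a * E j a)"
  shows "(\<Sum>k\<in>UNIV. \<Sum>k'\<in>UNIV. \<Sum>i\<in>UNIV. \<Sum>i'\<in>UNIV. \<Sum>j\<in>UNIV. \<Sum>j'\<in>UNIV.
      g k k' * g i i' * g j j' * S k i j * S k' i' j')
     = (\<Sum>a\<in>UNIV. \<Sum>b\<in>UNIV. \<Sum>c\<in>UNIV. (frame3 E S a b c)\<^sup>2)"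
proof -
  define F where "F k b c = frame2 E (S k) b c" for k b c
  have "(\<Sum>k\<in>UNIV. \<Sum>k'\<in>UNIV. \<Sum>i\<in>UNIV. \<Sum>i'\<in>UNIV. \<Sum>j\<in>UNIV. \<Sum>j'\<in>UNIV.
      g k k' * g i i' * g j j' * S k i j * S k' i' j')
     = (\<Sum>k\<in>UNIV. \<Sum>k'\<in>UNIV. g k k' * (\<Sum>b\<in>UNIV. \<Sum>c\<in>UNIV. F k b c * F k' b c))"
    by (simp add: sum_distrib_left mult_ac inverse_metric_norm2[OF g, symmetric] F_def)
  also have "\<dots> = (\<Sum>b\<in>UNIV. \<Sum>c\<in>UNIV. \<Sum>k\<in>UNIV. \<Sum>k'\<in>UNIV. g k k' * (F k b c * F k' b c))"
  proof -
    let ?f = "\<lambda>k k' b c. g k k' * (F k b c * F k' b c)"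
    have "(\<Sum>k\<in>UNIV. \<Sum>k'\<in>UNIV. g k k' * (\<Sum>b\<in>UNIV. \<Sum>c\<in>UNIV. F k b c * F k' b c))
       = (\<Sum>k\<in>UNIV. \<Sum>b\<in>UNIV. \<Sum>k'\<in>UNIV. \<Sum>c\<in>UNIV. ?f k k' b c)"
      by (simp add: sum_distrib_left) (rule sum.cong[OF refl], rule sum.swap)
    also have "\<dots> = (\<Sum>k\<in>UNIV. \<Sum>b\<in>UNIV. \<Sum>c\<in>UNIV. \<Sum>k'\<in>UNIV. ?f k k' b c)"
      by (rule sum.cong[OF refl], rule sum.cong[OF refl], rule sum.swap)
    also have "\<dots> = (\<Sum>b\<in>UNIV. \<Sum>c\<in>UNIV. \<Sum>k\<in>UNIV. \<Sum>k'\<in>UNIV. ?f k k' b c)"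
      by (subst sum.swap, rule sum.cong[OF refl], rule sum.swap)
    finally show ?thesis .
  qed
  also have "\<dots> = (\<Sum>b\<in>UNIV. \<Sum>c\<in>UNIV. \<Sum>a\<in>UNIV. (\<Sum>k\<in>UNIV. E k a * F k b c)\<^sup>2)"
    by (simp add: inverse_metric_bilinear[OF g] power2_eq_square)
  also have "\<dots> = (\<Sum>a\<in>UNIV. \<Sum>b\<in>UNIV. \<Sum>c\<in>UNIV. (\<Sum>k\<in>UNIV. E k a * F k b c)\<^sup>2)"
    by (subst sum.swap, rule sum.cong[OF refl], rule sum.swap)
  also have "\<dots> = (\<Sum>a\<in>UNIV. \<Sum>b\<in>UNIV. \<Sum>c\<in>UNIV. (frame3 E S a b c)\<^sup>2)"
    by (simp add: frame3_def F_def frame2_def sum_distrib_left mult_ac)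
  finally show ?thesis .
qed

lemma inner_matrix_vector:
  fixes M :: "real^'n::finite^'n" and u v :: "real^'n"
  shows "u \<bullet> (M *v v) = (\<Sum>i\<in>UNIV. \<Sum>j\<in>UNIV. u$i * v$j * M$i$j)"
  by (simp add: inner_vec_def matrix_vector_mult_def sum_distrib_left mult_ac)

lemma inverse_in_orthonormal_basis:
  fixes G Gi :: "real^'n::finite^'n" and e :: "'n \<Rightarrow> real^'n"
  assumes inverse: "G ** Gi = mat 1"
    and orthonormal: "\<And>a b. e a \<bullet> (G *v e b) = (if a = b then 1 else 0)"
  shows "Gi$i$j = (\<Sum>a\<in>UNIV. e a $ i * e a $ j)"
proof -
  define B :: "real^'n^'n" where "B = (\<chi> i a. e a $ i)"
  have "(transpose B ** G ** B) $ a $ b = e a \<bullet> (G *v e b)" for a b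
    by (simp add: B_def matrix_matrix_mult_def transpose_def inner_matrix_vector sum_distrib_left mult_ac)
       (subst sum.swap, simp add: mult_ac)
  then have "(transpose B ** G) ** B = mat 1" by (simp add: vec_eq_iff orthonormal mat_def)
  then have "B ** (transpose B ** G) = mat 1" using matrix_left_right_inverse by blast
  then have "(B ** transpose B) ** G = mat 1" by (simp add: matrix_mul_assoc)
  then have "Gi = B ** transpose B" by (metis inverse matrix_mul_assoc matrix_mul_lid matrix_mul_rid)
  then show ?thesis by (simp add: B_def matrix_matrix_mult_def transpose_def)
qed

locale principal_frame =
  fixes G Gi h :: "real^'n::finite^'n" and e :: "'n \<Rightarrow> real^'n" and lam :: "'n \<Rightarrow> real"
  assumes inverse: "G ** Gi = mat 1"
    and orthonormal: "\<And>a b. e a \<bullet> (G *v e b) = (if a = b then 1 else 0)"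
    and principal: "\<And>a. (Gi ** h) *v e a = lam a *\<^sub>R e a"
begin

definition E :: "'n \<Rightarrow> 'n \<Rightarrow> real" where "E i a = e a $ i"

lemma inverse_metric: "Gi$i$j = (\<Sum>a\<in>UNIV. E i a * E j a)"
  unfolding E_def by (rule inverse_in_orthonormal_basis[OF inverse orthonormal])

lemma metric_frame: "frame2 E (\<lambda>i j. G$i$j) a b = (if a = b then 1 else 0)"
  using orthonormal[of a b] by (simp add: frame2_def inner_matrix_vector E_def)

lemma second_form_frame: "frame2 E (\<lambda>i j. h$i$j) a b = (if a = b then lam a else 0)"
proof -
  have "h *v e b = lam b *\<^sub>R (G *v e b)"
    using arg_cong[OF principal[of b], of "(*v) G"]
    by (simp add: matrix_vector_mul_assoc matrix_mul_assoc inverse matrix_vector_mult_scaleR)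
  moreover have "frame2 E (\<lambda>i j. h$i$j) a b = e a \<bullet> (h *v e b)"
    by (simp add: frame2_def inner_matrix_vector E_def)
  ultimately have "frame2 E (\<lambda>i j. h$i$j) a b = lam b * (e a \<bullet> (G *v e b))"
    by simp
  then show ?thesis using orthonormal[of a b] by simp
qed

lemma traceless_frame: "frame2 E (\<lambda>i j. h$i$j - c * G$i$j) a b = (if a = b then lam a - c else 0)"
  by (simp add: frame2_diff second_form_frame metric_frame)

lemma traceless_norm2:
  "(\<Sum>i\<in>UNIV. \<Sum>i'\<in>UNIV. \<Sum>j\<in>UNIV. \<Sum>j'\<in>UNIV.
      Gi$i$i' * Gi$j$j' * (h$i$j - c * G$i$j) * (h$i'$j' - c * G$i'$j'))
   = (\<Sum>a\<in>UNIV. (lam a - c)\<^sup>2)"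
proof -
  have "(\<Sum>b\<in>UNIV. frame2 E (\<lambda>i j. h$i$j - c * G$i$j) a b * frame2 E (\<lambda>i j. h$i$j - c * G$i$j) a b)
      = (lam a - c)\<^sup>2" for a
    by (simp add: traceless_frame power2_eq_square if_distrib cong: if_cong)
  then show ?thesis
    by (simp add: inverse_metric_norm2[OF inverse_metric])
qed

lemma gradient_trace_frame:
  assumes dH: "\<And>k. dH k = (\<Sum>i\<in>UNIV. \<Sum>j\<in>UNIV. Gi$i$j * S k i j)"
  shows "(\<Sum>k\<in>UNIV. E k a * dH k) = (\<Sum>b\<in>UNIV. frame3 E S a b b)"
proof -
  have "(\<Sum>k\<in>UNIV. E k a * dH k) = (\<Sum>k\<in>UNIV. \<Sum>b\<in>UNIV. E k a * frame2 E (S k) b b)"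
    by (simp add: dH inverse_metric_trace[OF inverse_metric] sum_distrib_left)
  also have "\<dots> = (\<Sum>b\<in>UNIV. frame3 E S a b b)"
    by (subst sum.swap) (simp add: frame3_def frame2_def sum_distrib_left mult_ac)
  finally show ?thesis .
qed

lemma traceless_derivative_frame:
  assumes T: "\<And>k i j. T k i j = S k i j - dH k / real CARD('n) * G$i$j"
  shows "frame3 E T a b c
    = frame3 E S a b c - (if b = c then (\<Sum>k\<in>UNIV. E k a * dH k) / real CARD('n) else 0)"
proof -
  have "frame3 E T a b c = frame3 E S a b c
      - (\<Sum>k\<in>UNIV. (E k a * dH k / real CARD('n)) * frame2 E (\<lambda>i j. G$i$j) b c)"
    by (simp add: frame3_def frame2_def T algebra_simps sum_subtractf sum_distrib_left)
  then show ?thesis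
    by (simp add: metric_frame sum_divide_distrib)
qed

text \<open>The derivative of \<open>|h - cG|\<close>, written through the contraction of a derivative
  tensor \<open>T\<close> with \<open>h - cG\<close>, only sees the diagonal components of \<open>T\<close>.\<close>
lemma norm_derivative_frame:
  assumes dN: "\<And>k. dN k = (\<Sum>i\<in>UNIV. \<Sum>i'\<in>UNIV. \<Sum>j\<in>UNIV. \<Sum>j'\<in>UNIV.
      Gi$i$i' * Gi$j$j' * T k i j * (h$i'$j' - c * G$i'$j')) / N"
  shows "(\<Sum>k\<in>UNIV. E k a * dN k) = (\<Sum>b\<in>UNIV. frame3 E T a b b * (lam b - c)) / N"
proof -
  let ?hc = "\<lambda>i j. h$i$j - c * G$i$j"
  have dN_frame: "dN k = (\<Sum>b\<in>UNIV. \<Sum>d\<in>UNIV. frame2 E (T k) b d * frame2 E ?hc b d) / N" for k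
    by (simp only: dN inverse_metric_norm2[OF inverse_metric])
  have "(\<Sum>k\<in>UNIV. E k a * dN k)
      = (\<Sum>k\<in>UNIV. E k a * (\<Sum>b\<in>UNIV. \<Sum>d\<in>UNIV. frame2 E (T k) b d * frame2 E ?hc b d)) / N"
    by (simp only: dN_frame times_divide_eq_right sum_divide_distrib[symmetric])
  also have "(\<Sum>k\<in>UNIV. E k a * (\<Sum>b\<in>UNIV. \<Sum>d\<in>UNIV. frame2 E (T k) b d * frame2 E ?hc b d))
      = (\<Sum>b\<in>UNIV. \<Sum>d\<in>UNIV. frame3 E T a b d * frame2 E ?hc b d)"
  proof -
    have "(\<Sum>k\<in>UNIV. E k a * (\<Sum>b\<in>UNIV. \<Sum>d\<in>UNIV. frame2 E (T k) b d * frame2 E ?hc b d))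
        = (\<Sum>k\<in>UNIV. \<Sum>b\<in>UNIV. \<Sum>d\<in>UNIV. E k a * frame2 E (T k) b d * frame2 E ?hc b d)"
      by (simp add: sum_distrib_left mult_ac)
    also have "\<dots> = (\<Sum>b\<in>UNIV. \<Sum>d\<in>UNIV. \<Sum>k\<in>UNIV. E k a * frame2 E (T k) b d * frame2 E ?hc b d)"
      by (subst sum.swap, rule sum.cong[OF refl], rule sum.swap)
    also have "\<dots> = (\<Sum>b\<in>UNIV. \<Sum>d\<in>UNIV. (\<Sum>k\<in>UNIV. E k a * frame2 E (T k) b d) * frame2 E ?hc b d)"
      by (simp only: sum_distrib_right)
    finally show ?thesis
      by (simp add: frame3_def frame2_def sum_distrib_left mult_ac)
  qed
  also have "\<dots> = (\<Sum>b\<in>UNIV. frame3 E T a b b * (lam b - c))"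
    by (simp add: traceless_frame if_distrib cong: if_cong)
  finally show ?thesis .
qed

lemma gradient_norm_frame:
  assumes N: "N = sqrt (\<Sum>i\<in>UNIV. \<Sum>i'\<in>UNIV. \<Sum>j\<in>UNIV. \<Sum>j'\<in>UNIV.
      Gi$i$i' * Gi$j$j' * (h$i$j - c * G$i$j) * (h$i'$j' - c * G$i'$j'))"
    and N_nonzero: "N \<noteq> 0"
    and dN: "\<And>k. dN k = (\<Sum>i\<in>UNIV. \<Sum>i'\<in>UNIV. \<Sum>j\<in>UNIV. \<Sum>j'\<in>UNIV.
      Gi$i$i' * Gi$j$j' * T k i j * (h$i'$j' - c * G$i'$j')) / N"
  shows "(\<Sum>i\<in>UNIV. \<Sum>j\<in>UNIV. Gi$i$j * dN i * dN j)
      = (\<Sum>a\<in>UNIV. (\<Sum>b\<in>UNIV. frame3 E T a b b * (lam b - c))\<^sup>2) / (\<Sum>b\<in>UNIV. (lam b - c)\<^sup>2)"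
    and "(\<Sum>b\<in>UNIV. (lam b - c)\<^sup>2) > 0"
proof -
  have N_sq: "N\<^sup>2 = (\<Sum>b\<in>UNIV. (lam b - c)\<^sup>2)"
    unfolding N traceless_norm2 by (simp add: sum_nonneg)
  have "(\<Sum>i\<in>UNIV. \<Sum>j\<in>UNIV. Gi$i$j * dN i * dN j) = (\<Sum>a\<in>UNIV. (\<Sum>k\<in>UNIV. E k a * dN k)\<^sup>2)"
    using inverse_metric_bilinear[OF inverse_metric, where u = dN and v = dN]
    by (simp add: power2_eq_square mult_ac)
  also have "\<dots> = (\<Sum>a\<in>UNIV. (\<Sum>b\<in>UNIV. frame3 E T a b b * (lam b - c))\<^sup>2) / N\<^sup>2"
    by (simp add: norm_derivative_frame[OF dN] power_divide flip: sum_divide_distrib)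
  finally show "(\<Sum>i\<in>UNIV. \<Sum>j\<in>UNIV. Gi$i$j * dN i * dN j)
      = (\<Sum>a\<in>UNIV. (\<Sum>b\<in>UNIV. frame3 E T a b b * (lam b - c))\<^sup>2) / (\<Sum>b\<in>UNIV. (lam b - c)\<^sup>2)"
    by (simp add: N_sq)
  show "(\<Sum>b\<in>UNIV. (lam b - c)\<^sup>2) > 0" using N_sq N_nonzero by (metis zero_less_power2)
qed

text \<open>Reduction of the Kato inequality at a point to the frame inequality
  \<open>kato_frame_inequality\<close>: \<open>S\<close> is \<open>\<nabla>h\<close>, \<open>dH\<close> the gradient of the trace,
  \<open>T\<close> = \<open>\<nabla>\<mathring>h\<close>, \<open>N\<close> = \<open>|\<mathring>h|\<close> and \<open>dN\<close> the gradient of \<open>N\<close>.\<close>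
theorem kato_inequality:
  fixes S T :: "'n \<Rightarrow> 'n \<Rightarrow> 'n \<Rightarrow> real" and dH dN :: "'n \<Rightarrow> real" and H N :: real
  defines "n \<equiv> real CARD('n)"
  assumes S_sym1: "\<And>a b c. S a b c = S b a c" and S_sym2: "\<And>a b c. S a b c = S a c b"
    and dH: "\<And>k. dH k = (\<Sum>i\<in>UNIV. \<Sum>j\<in>UNIV. Gi$i$j * S k i j)"
    and T: "\<And>k i j. T k i j = S k i j - dH k / n * G$i$j"
    and N: "N = sqrt (\<Sum>i\<in>UNIV. \<Sum>i'\<in>UNIV. \<Sum>j\<in>UNIV. \<Sum>j'\<in>UNIV.
      Gi$i$i' * Gi$j$j' * (h$i$j - H / n * G$i$j) * (h$i'$j' - H / n * G$i'$j'))"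
    and N_nonzero: "N \<noteq> 0"
    and dN: "\<And>k. dN k = (\<Sum>i\<in>UNIV. \<Sum>i'\<in>UNIV. \<Sum>j\<in>UNIV. \<Sum>j'\<in>UNIV.
      Gi$i$i' * Gi$j$j' * T k i j * (h$i'$j' - H / n * G$i'$j')) / N"
    and hyp: "(\<Sum>a\<in>UNIV. (\<Sum>k\<in>UNIV. \<Sum>i\<in>UNIV. \<Sum>j\<in>UNIV. e a $ k * e a $ i * e a $ j * S k i j)
        * (\<Sum>k\<in>UNIV. e a $ k * dH k))
      \<le> (n + 1) / (2 * n) * (\<Sum>i\<in>UNIV. \<Sum>j\<in>UNIV. Gi$i$j * dH i * dH j)"
  shows "(1 + 1 / n) * (\<Sum>i\<in>UNIV. \<Sum>j\<in>UNIV. Gi$i$j * dN i * dN j)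
     \<le> (\<Sum>k\<in>UNIV. \<Sum>k'\<in>UNIV. \<Sum>i\<in>UNIV. \<Sum>i'\<in>UNIV. \<Sum>j\<in>UNIV. \<Sum>j'\<in>UNIV.
      Gi$k$k' * Gi$i$i' * Gi$j$j' * T k i j * T k' i' j')"
proof -
  define K where "K a = (\<Sum>k\<in>UNIV. E k a * dH k)" for a
  define \<mu> where "\<mu> a = lam a - H / n" for a
  note gradient = gradient_norm_frame[OF N N_nonzero dN, folded \<mu>_def]
  have T_frame: "frame3 E T a b c = frame3 E S a b c - (if b = c then K a / n else 0)" for a b c
    using traceless_derivative_frame[OF T[unfolded n_def]] by (simp add: K_def n_def)
  have lhs: "(\<Sum>k\<in>UNIV. \<Sum>k'\<in>UNIV. \<Sum>i\<in>UNIV. \<Sum>i'\<in>UNIV. \<Sum>j\<in>UNIV. \<Sum>j'\<in>UNIV.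
      Gi$k$k' * Gi$i$i' * Gi$j$j' * T k i j * T k' i' j')
    = (\<Sum>a\<in>UNIV. \<Sum>b\<in>UNIV. \<Sum>c\<in>UNIV. (frame3 E S a b c - (if b = c then K a / n else 0))\<^sup>2)"
    by (simp only: inverse_metric_norm3[OF inverse_metric] T_frame)
  have rhs: "(\<Sum>i\<in>UNIV. \<Sum>j\<in>UNIV. Gi$i$j * dN i * dN j)
    = (\<Sum>a\<in>UNIV. (\<Sum>b\<in>UNIV. (frame3 E S a b b - K a / n) * \<mu> b)\<^sup>2) / (\<Sum>b\<in>UNIV. (\<mu> b)\<^sup>2)"
    by (simp add: gradient(1) T_frame)
  have hyp_frame: "(\<Sum>a\<in>UNIV. frame3 E S a a a * K a) \<le> (n + 1) / (2 * n) * (\<Sum>a\<in>UNIV. (K a)\<^sup>2)"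
  proof -
    have "(\<Sum>i\<in>UNIV. \<Sum>j\<in>UNIV. Gi$i$j * dH i * dH j) = (\<Sum>a\<in>UNIV. (K a)\<^sup>2)"
      using inverse_metric_bilinear[OF inverse_metric, where u = dH and v = dH]
      by (simp add: K_def power2_eq_square mult_ac)
    then show ?thesis using hyp by (simp add: frame3_def K_def E_def)
  qed
  have K_trace: "K a = (\<Sum>b\<in>UNIV. frame3 E S a b b)" for a
    unfolding K_def by (rule gradient_trace_frame[OF dH])
  have S_frame_sym: "frame3 E S a b c = frame3 E S b a c" "frame3 E S a b c = frame3 E S a c b" for a b c
    by (rule frame3_swap12[OF S_sym1, symmetric], rule frame3_swap23[OF S_sym2, symmetric])
  show ?thesis unfolding lhs rhs n_def
    by (rule kato_frame_inequality[OF S_frame_sym K_trace gradient(2) hyp_frame[unfolded n_def]])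
qed

end

text \<open>Calculus of the coordinate partial derivatives \<open>pd\<close>.\<close>

lemma has_frechet_derivative: "f differentiable (at x) \<Longrightarrow> (f has_derivative frechet_derivative f (at x)) (at x)"
  using frechet_derivative_works by blast

lemma pd_eq: "(f has_derivative f') (at x) \<Longrightarrow> pd i f x = f' (axis i 1)"
  unfolding pd_def using frechet_derivative_at by metis

lemma pd_cong_open:
  assumes "open U" "x \<in> U" "\<And>y. y \<in> U \<Longrightarrow> f y = g y"
  shows "pd i f x = pd i g x"
proof -
  have "(\<lambda>f'. (f has_derivative f') (at x)) = (\<lambda>f'. (g has_derivative f') (at x))"
    using assms by (auto intro!: ext intro: has_derivative_transform_within_open[where s=U])
  then show ?thesis unfolding pd_def frechet_derivative_def by simp
qed

lemma differentiable_cong_open: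
  assumes "open U" "x \<in> U" "\<And>y. y \<in> U \<Longrightarrow> f y = g y" "f differentiable (at x)"
  shows "g differentiable (at x)"
  using assms unfolding differentiable_def
  by (auto intro: has_derivative_transform_within_open[where s=U])

lemma pd_diff: "f differentiable (at x) \<Longrightarrow> g differentiable (at x) \<Longrightarrow>
  pd i (\<lambda>y. f y - g y) x = pd i f x - pd i g x"
  by (rule trans[OF pd_eq[OF has_derivative_diff[OF has_frechet_derivative has_frechet_derivative]]])
     (simp_all add: pd_def)

lemma pd_mult:
  fixes f g :: "real^'n::finite \<Rightarrow> real"
  shows "f differentiable (at x) \<Longrightarrow> g differentiable (at x) \<Longrightarrow>
    pd i (\<lambda>y. f y * g y) x = pd i f x * g x + f x * pd i g x"
  by (rule trans[OF pd_eq[OF has_derivative_mult[OF has_frechet_derivative has_frechet_derivative]]])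
     (simp_all add: pd_def)

lemma pd_inner:
  fixes f g :: "real^'n::finite \<Rightarrow> real^'m::finite"
  shows "f differentiable (at x) \<Longrightarrow> g differentiable (at x) \<Longrightarrow>
    pd i (\<lambda>y. f y \<bullet> g y) x = pd i f x \<bullet> g x + f x \<bullet> pd i g x"
  by (rule trans[OF pd_eq[OF has_derivative_inner[OF has_frechet_derivative has_frechet_derivative]]])
     (simp_all add: pd_def)

lemma pd_const: "pd i (\<lambda>y. c) x = 0"
  by (rule trans[OF pd_eq[OF has_derivative_const]]) simp

lemma pd_cmult:
  fixes f :: "real^'n::finite \<Rightarrow> real"
  shows "f differentiable (at x) \<Longrightarrow> pd i (\<lambda>y. c * f y) x = c * pd i f x"
  using pd_mult[of "\<lambda>y. c" x f i] by (simp add: pd_const)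

lemma pd_sum:
  fixes f :: "'a \<Rightarrow> real^'n::finite \<Rightarrow> 'b::real_normed_vector"
  assumes "finite A" "\<And>a. a \<in> A \<Longrightarrow> f a differentiable (at x)"
  shows "pd i (\<lambda>y. \<Sum>a\<in>A. f a y) x = (\<Sum>a\<in>A. pd i (f a) x)"
proof -
  have "((\<lambda>y. \<Sum>a\<in>A. f a y) has_derivative (\<lambda>v. \<Sum>a\<in>A. frechet_derivative (f a) (at x) v)) (at x)"
    using assms by (intro has_derivative_sum has_frechet_derivative) auto
  from pd_eq[OF this, of i] show ?thesis by (simp add: pd_def)
qed

lemma pd_sum2:
  fixes f :: "'a::finite \<Rightarrow> 'b::finite \<Rightarrow> real^'n::finite \<Rightarrow> real"
  assumes "\<And>a b. f a b differentiable (at x)"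
  shows "pd k (\<lambda>y. \<Sum>a\<in>UNIV. \<Sum>b\<in>UNIV. f a b y) x = (\<Sum>a\<in>UNIV. \<Sum>b\<in>UNIV. pd k (f a b) x)"
proof -
  have "pd k (\<lambda>y. \<Sum>a\<in>UNIV. \<Sum>b\<in>UNIV. f a b y) x = (\<Sum>a\<in>UNIV. pd k (\<lambda>y. \<Sum>b\<in>UNIV. f a b y) x)"
    by (rule pd_sum) (auto intro!: differentiable_sum assms)
  also have "\<dots> = (\<Sum>a\<in>UNIV. \<Sum>b\<in>UNIV. pd k (f a b) x)"
    by (intro sum.cong refl pd_sum) (auto intro: assms)
  finally show ?thesis .
qed

lemma pd_sum4:
  fixes f :: "'a::finite \<Rightarrow> 'b::finite \<Rightarrow> 'c::finite \<Rightarrow> 'd::finite \<Rightarrow> real^'n::finite \<Rightarrow> real"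
  assumes "\<And>a b c d. f a b c d differentiable (at x)"
  shows "pd k (\<lambda>y. \<Sum>a\<in>UNIV. \<Sum>b\<in>UNIV. \<Sum>c\<in>UNIV. \<Sum>d\<in>UNIV. f a b c d y) x
     = (\<Sum>a\<in>UNIV. \<Sum>b\<in>UNIV. \<Sum>c\<in>UNIV. \<Sum>d\<in>UNIV. pd k (f a b c d) x)"
proof -
  have "pd k (\<lambda>y. \<Sum>a\<in>UNIV. \<Sum>b\<in>UNIV. \<Sum>c\<in>UNIV. \<Sum>d\<in>UNIV. f a b c d y) x
      = (\<Sum>a\<in>UNIV. \<Sum>b\<in>UNIV. pd k (\<lambda>y. \<Sum>c\<in>UNIV. \<Sum>d\<in>UNIV. f a b c d y) x)"
    by (rule pd_sum2) (auto intro!: differentiable_sum assms)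
  also have "\<dots> = (\<Sum>a\<in>UNIV. \<Sum>b\<in>UNIV. \<Sum>c\<in>UNIV. \<Sum>d\<in>UNIV. pd k (f a b c d) x)"
    by (intro sum.cong refl pd_sum2) (auto intro: assms)
  finally show ?thesis .
qed

lemma pd_nth:
  fixes f :: "real^'n::finite \<Rightarrow> real^'m::finite"
  shows "f differentiable (at x) \<Longrightarrow> pd i (\<lambda>y. f y $ c) x = pd i f x $ c"
proof -
  assume "f differentiable (at x)"
  then have "((\<lambda>y. f y $ c) has_derivative (\<lambda>v. frechet_derivative f (at x) v $ c)) (at x)"
    by (intro bounded_linear.has_derivative[OF bounded_linear_vec_nth] has_frechet_derivative)
  from pd_eq[OF this, of i] show ?thesis by (simp add: pd_def)
qed

lemma differentiable_nth:
  fixes f :: "real^'n::finite \<Rightarrow> real^'m::finite"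
  shows "f differentiable (at x) \<Longrightarrow> (\<lambda>y. f y $ c) differentiable (at x)"
  unfolding differentiable_def
  by (auto intro: bounded_linear.has_derivative[OF bounded_linear_vec_nth])

lemma differentiable_prod:
  fixes f :: "'a \<Rightarrow> real^'n::finite \<Rightarrow> real"
  assumes "\<And>a. a \<in> A \<Longrightarrow> f a differentiable (at x)"
  shows "(\<lambda>y. \<Prod>a\<in>A. f a y) differentiable (at x)"
proof -
  have "((\<lambda>y. \<Prod>a\<in>A. f a y) has_derivative
      (\<lambda>v. \<Sum>a\<in>A. frechet_derivative (f a) (at x) v * (\<Prod>j\<in>A - {a}. f j x))) (at x)"
    using assms by (intro has_derivative_prod has_frechet_derivative) auto
  then show ?thesis unfolding differentiable_def by blast
qed

lemma pd_sqrt: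
  fixes f :: "real^'n::finite \<Rightarrow> real"
  assumes "f differentiable (at x)" "f x > 0"
  shows "pd i (\<lambda>y. sqrt (f y)) x = pd i f x / (2 * sqrt (f x))"
proof -
  have "((\<lambda>y. sqrt (f y)) has_derivative (\<lambda>v. inverse (sqrt (f x)) / 2 * frechet_derivative f (at x) v)) (at x)"
    using has_derivative_compose[OF has_frechet_derivative[OF assms(1)]
        DERIV_real_sqrt[OF assms(2), unfolded has_field_derivative_def]]
    by simp
  from pd_eq[OF this, of i] show ?thesis by (simp add: pd_def divide_simps mult.commute)
qed

lemma smooth_on_pd: "smooth_on U f \<Longrightarrow> smooth_on U (pd i f)"
  unfolding smooth_on_def by (metis Ck.simps(2))

lemma smooth_on_differentiable: "smooth_on U f \<Longrightarrow> open U \<Longrightarrow> y \<in> U \<Longrightarrow> f differentiable (at y)"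
  unfolding smooth_on_def by (metis Ck.simps(2) differentiable_on_eq_differentiable_at)

text \<open>Symmetry of second partial derivatives (Schwarz--Clairaut) for a function that is
  differentiable near \<open>x\<close> and whose first partials are differentiable at \<open>x\<close>.  The
  proof compares the second difference
  \<open>\<Delta>(t) = f(x + te\<^sub>j + te\<^sub>i) - f(x + te\<^sub>j) - f(x + te\<^sub>i) + f(x)\<close>
  with \<open>t\<^sup>2 \<partial>\<^sub>j\<partial>\<^sub>if(x)\<close> and with \<open>t\<^sup>2 \<partial>\<^sub>i\<partial>\<^sub>jf(x)\<close>.\<close>

lemma line_derivative:
  fixes f :: "real^'n::finite \<Rightarrow> real"
  assumes "f differentiable (at (p + s *\<^sub>R v))"
  shows "((\<lambda>s. f (p + s *\<^sub>R v)) has_real_derivative (frechet_derivative f (at (p + s *\<^sub>R v)) v)) (at s)"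
proof -
  have f': "(f has_derivative frechet_derivative f (at (p + s *\<^sub>R v))) (at (p + s *\<^sub>R v))"
    using assms by (rule has_frechet_derivative)
  have "((\<lambda>s. p + s *\<^sub>R v) has_derivative (\<lambda>h. h *\<^sub>R v)) (at s)"
    by (auto intro!: derivative_eq_intros)
  from has_derivative_compose[OF this f']
  have "((\<lambda>s. f (p + s *\<^sub>R v)) has_derivative (\<lambda>h. frechet_derivative f (at (p + s *\<^sub>R v)) (h *\<^sub>R v))) (at s)"
    by simp
  moreover have "(\<lambda>h. frechet_derivative f (at (p + s *\<^sub>R v)) (h *\<^sub>R v))
      = (\<lambda>h. frechet_derivative f (at (p + s *\<^sub>R v)) v * h)"
    using has_derivative_linear[OF f'] by (auto simp: linear_scale mult.commute)
  ultimately show ?thesis by (simp add: has_field_derivative_def)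
qed

text \<open>Mean value theorem applied to \<open>s \<mapsto> f(x + te\<^sub>j + se\<^sub>i) - f(x + se\<^sub>i)\<close>.\<close>
lemma second_difference_mvt:
  fixes f :: "real^'n::finite \<Rightarrow> real"
  assumes diff: "\<And>y. y \<in> ball x d \<Longrightarrow> f differentiable (at y)" and t: "0 < t" "2 * t < d"
  obtains \<xi> where "0 < \<xi>" "\<xi> < t"
    "f (x + t *\<^sub>R axis j 1 + t *\<^sub>R axis i 1) - f (x + t *\<^sub>R axis j 1) - (f (x + t *\<^sub>R axis i 1) - f x)
     = t * (pd i f (x + t *\<^sub>R axis j 1 + \<xi> *\<^sub>R axis i 1) - pd i f (x + \<xi> *\<^sub>R axis i 1))"
proof -
  define ei ej :: "real^'n" where "ei = axis i 1" and "ej = axis j 1"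
  define u where "u s = f (x + t *\<^sub>R ej + s *\<^sub>R ei) - f (x + s *\<^sub>R ei)" for s
  have in_ball: "x + c *\<^sub>R ej + s *\<^sub>R ei \<in> ball x d" if "0 \<le> s" "s \<le> t" "0 \<le> c" "c \<le> t" for s c
  proof -
    have "norm (c *\<^sub>R ej + s *\<^sub>R ei) \<le> c + s"
      using norm_triangle_ineq[of "c *\<^sub>R ej" "s *\<^sub>R ei"] that by (simp add: ei_def ej_def)
    moreover have "dist x (x + (c *\<^sub>R ej + s *\<^sub>R ei)) = norm (c *\<^sub>R ej + s *\<^sub>R ei)"
      by (metis add_diff_cancel_left' dist_commute dist_norm)
    ultimately show ?thesis using that t by (simp add: add.assoc)
  qed
  have u': "(u has_real_derivative (pd i f (x + t *\<^sub>R ej + s *\<^sub>R ei) - pd i f (x + s *\<^sub>R ei))) (at s)"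
    if "0 \<le> s" "s \<le> t" for s
    unfolding u_def pd_def ei_def[symmetric] using in_ball[OF that, of t] in_ball[OF that, of 0] t
    by (intro DERIV_diff line_derivative diff) simp_all
  obtain l \<xi> where \<xi>: "0 < \<xi>" "\<xi> < t" and l: "(u has_real_derivative l) (at \<xi>)" and "u t - u 0 = (t - 0) * l"
  proof -
    have "continuous_on {0..t} u"
      by (intro continuous_at_imp_continuous_on ballI DERIV_isCont[OF u']) auto
    moreover have "u differentiable (at s)" if "0 < s" "s < t" for s
      using u'[of s] that by (auto simp: real_differentiable_def)
    ultimately show ?thesis using MVT[OF t(1), of u] that by auto
  qed
  moreover have "l = pd i f (x + t *\<^sub>R ej + \<xi> *\<^sub>R ei) - pd i f (x + \<xi> *\<^sub>R ei)"
    using DERIV_unique[OF l u'[of \<xi>]] \<xi> by simp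
  ultimately show ?thesis
    using that[OF \<xi>] by (simp add: u_def ei_def ej_def algebra_simps)
qed

lemma second_difference_estimate:
  fixes f :: "real^'n::finite \<Rightarrow> real"
  assumes diff: "\<And>y. y \<in> ball x d \<Longrightarrow> f differentiable (at y)"
    and L: "linear L"
    and est: "\<And>v. norm v < d \<Longrightarrow> \<bar>pd i f (x + v) - pd i f x - L v\<bar> \<le> \<epsilon> * norm v"
    and t: "0 < t" "2 * t < d" and \<epsilon>: "\<epsilon> \<ge> 0"
  shows "\<bar>f (x + t *\<^sub>R axis j 1 + t *\<^sub>R axis i 1) - f (x + t *\<^sub>R axis j 1) - (f (x + t *\<^sub>R axis i 1) - f x)
      - t\<^sup>2 * L (axis j 1)\<bar> \<le> 3 * \<epsilon> * t\<^sup>2"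
proof -
  obtain \<xi> where \<xi>: "0 < \<xi>" "\<xi> < t" and mvt:
    "f (x + t *\<^sub>R axis j 1 + t *\<^sub>R axis i 1) - f (x + t *\<^sub>R axis j 1) - (f (x + t *\<^sub>R axis i 1) - f x)
     = t * (pd i f (x + t *\<^sub>R axis j 1 + \<xi> *\<^sub>R axis i 1) - pd i f (x + \<xi> *\<^sub>R axis i 1))"
    using second_difference_mvt[OF diff t] by blast
  define v1 v2 :: "real^'n" where "v1 = t *\<^sub>R axis j 1 + \<xi> *\<^sub>R axis i 1" and "v2 = \<xi> *\<^sub>R axis i 1"
  have v1: "norm v1 \<le> 2 * t"
    using norm_triangle_ineq[of "t *\<^sub>R axis j 1 :: real^'n" "\<xi> *\<^sub>R axis i 1"] \<xi> t
    by (simp add: v1_def)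
  have v2: "norm v2 \<le> t" using \<xi> by (simp add: v2_def)
  have "L v1 - L v2 = t * L (axis j 1)"
    using L by (simp add: v1_def v2_def linear_add linear_scale)
  then have "\<bar>(pd i f (x + v1) - pd i f (x + v2)) - t * L (axis j 1)\<bar> \<le> \<epsilon> * norm v1 + \<epsilon> * norm v2"
    using est[of v1] est[of v2] v1 v2 t by linarith
  also have "\<dots> \<le> \<epsilon> * (2 * t) + \<epsilon> * t"
    using v1 v2 \<epsilon> by (intro add_mono mult_left_mono) auto
  finally have "t * \<bar>(pd i f (x + v1) - pd i f (x + v2)) - t * L (axis j 1)\<bar> \<le> t * (3 * \<epsilon> * t)"
    using t by (intro mult_left_mono) auto
  moreover have "f (x + t *\<^sub>R axis j 1 + t *\<^sub>R axis i 1) - f (x + t *\<^sub>R axis j 1) - (f (x + t *\<^sub>R axis i 1) - f x)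
      - t\<^sup>2 * L (axis j 1) = t * ((pd i f (x + v1) - pd i f (x + v2)) - t * L (axis j 1))"
    using mvt by (simp add: v1_def v2_def add.assoc power2_eq_square algebra_simps)
  ultimately show ?thesis
    using t by (simp add: abs_mult power2_eq_square mult_ac)
qed

lemma mixed_partials_close:
  fixes f :: "real^'n::finite \<Rightarrow> real"
  assumes U: "open U" "x \<in> U" and diff: "\<And>y. y \<in> U \<Longrightarrow> f differentiable (at y)"
    and hi: "(pd i f has_derivative Li) (at x)" and hj: "(pd j f has_derivative Lj) (at x)"
    and \<epsilon>: "\<epsilon> > 0"
  shows "\<bar>Li (axis j 1) - Lj (axis i 1)\<bar> \<le> 6 * \<epsilon>"
proof -
  obtain d1 where d1: "d1 > 0" "\<And>y. norm (y - x) < d1 \<Longrightarrow> norm (pd i f y - pd i f x - Li (y - x)) \<le> \<epsilon> * norm (y - x)"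
    using hi \<epsilon> unfolding has_derivative_at_alt by blast
  obtain d2 where d2: "d2 > 0" "\<And>y. norm (y - x) < d2 \<Longrightarrow> norm (pd j f y - pd j f x - Lj (y - x)) \<le> \<epsilon> * norm (y - x)"
    using hj \<epsilon> unfolding has_derivative_at_alt by blast
  obtain d3 where d3: "d3 > 0" "ball x d3 \<subseteq> U" using U open_contains_ball by blast
  define d where "d = min d1 (min d2 d3)"
  define t where "t = d / 3"
  have "d > 0" using d1 d2 d3 by (simp add: d_def)
  then have t: "0 < t" "2 * t < d" by (simp_all add: t_def)
  have diff_ball: "\<And>y. y \<in> ball x d \<Longrightarrow> f differentiable (at y)"
    using d3 diff by (auto simp: d_def)
  have A: "\<bar>f (x + t *\<^sub>R axis j 1 + t *\<^sub>R axis i 1) - f (x + t *\<^sub>R axis j 1) - (f (x + t *\<^sub>R axis i 1) - f x)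
    - t\<^sup>2 * Li (axis j 1)\<bar> \<le> 3 * \<epsilon> * t\<^sup>2"
    using d1(2)[of "x + _"] \<epsilon>
    by (intro second_difference_estimate[OF diff_ball has_derivative_linear[OF hi] _ t]) (auto simp: d_def)
  have B: "\<bar>f (x + t *\<^sub>R axis i 1 + t *\<^sub>R axis j 1) - f (x + t *\<^sub>R axis i 1) - (f (x + t *\<^sub>R axis j 1) - f x)
    - t\<^sup>2 * Lj (axis i 1)\<bar> \<le> 3 * \<epsilon> * t\<^sup>2"
    using d2(2)[of "x + _"] \<epsilon>
    by (intro second_difference_estimate[OF diff_ball has_derivative_linear[OF hj] _ t]) (auto simp: d_def)
  have swap: "x + t *\<^sub>R axis i 1 + t *\<^sub>R axis j 1 = x + t *\<^sub>R axis j 1 + t *\<^sub>R axis i 1"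
    by (simp add: algebra_simps)
  have "\<bar>t\<^sup>2 * Li (axis j 1) - t\<^sup>2 * Lj (axis i 1)\<bar> \<le> 6 * \<epsilon> * t\<^sup>2"
    using A B[unfolded swap] unfolding abs_le_iff by linarith
  then have "t\<^sup>2 * \<bar>Li (axis j 1) - Lj (axis i 1)\<bar> \<le> t\<^sup>2 * (6 * \<epsilon>)"
    by (simp add: abs_mult flip: right_diff_distrib) (simp add: algebra_simps)
  then show ?thesis using t by simp
qed

text \<open>Schwarz--Clairaut: \<open>\<partial>\<^sub>j\<partial>\<^sub>if = \<partial>\<^sub>i\<partial>\<^sub>jf\<close>, since the two estimates of
  \<open>mixed_partials_close\<close> hold for every \<open>\<epsilon> > 0\<close>.\<close>
lemma pd_commute:
  fixes f :: "real^'n::finite \<Rightarrow> real"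
  assumes U: "open U" "x \<in> U" and diff: "\<And>y. y \<in> U \<Longrightarrow> f differentiable (at y)"
    and di: "pd i f differentiable (at x)" and dj: "pd j f differentiable (at x)"
  shows "pd j (pd i f) x = pd i (pd j f) x"
proof -
  define Li Lj where "Li = frechet_derivative (pd i f) (at x)" and "Lj = frechet_derivative (pd j f) (at x)"
  have hi: "(pd i f has_derivative Li) (at x)" and hj: "(pd j f has_derivative Lj) (at x)"
    using has_frechet_derivative[OF di] has_frechet_derivative[OF dj] by (simp_all add: Li_def Lj_def)
  have "\<bar>Li (axis j 1) - Lj (axis i 1)\<bar> \<le> 0"
  proof (rule field_le_epsilon)
    show "\<bar>Li (axis j 1) - Lj (axis i 1)\<bar> \<le> 0 + e" if "0 < e" for e :: real
      using mixed_partials_close[OF U diff hi hj, of "e / 6"] that by simp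
  qed
  then show ?thesis by (simp add: pd_def Li_def Lj_def)
qed

lemma pd_commute_vec:
  fixes f :: "real^'n::finite \<Rightarrow> real^'m::finite"
  assumes U: "open U" "x \<in> U" and diff: "\<And>y. y \<in> U \<Longrightarrow> f differentiable (at y)"
    and di: "\<And>y. y \<in> U \<Longrightarrow> pd i f differentiable (at y)"
    and dj: "\<And>y. y \<in> U \<Longrightarrow> pd j f differentiable (at y)"
  shows "pd j (pd i f) x = pd i (pd j f) x"
proof -
  have "pd j (pd i f) x $ c = pd i (pd j f) x $ c" for c
  proof -
    define fc where "fc y = f y $ c" for y
    have pd_fc: "pd k fc y = pd k f y $ c" if "y \<in> U" for k y
      unfolding fc_def using pd_nth[OF diff[OF that]] .
    have "pd j (pd i fc) x = pd i (pd j fc) x"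
    proof (rule pd_commute[OF U])
      show "fc differentiable (at y)" if "y \<in> U" for y
        unfolding fc_def by (rule differentiable_nth[OF diff[OF that]])
      show "pd i fc differentiable (at x)"
        by (rule differentiable_cong_open[OF U, of "\<lambda>y. pd i f y $ c"])
           (simp_all add: pd_fc differentiable_nth di U)
      show "pd j fc differentiable (at x)"
        by (rule differentiable_cong_open[OF U, of "\<lambda>y. pd j f y $ c"])
           (simp_all add: pd_fc differentiable_nth dj U)
    qed
    moreover have "pd j (pd i fc) x = pd j (pd i f) x $ c" "pd i (pd j fc) x = pd i (pd j f) x $ c"
      by (simp_all add: pd_cong_open[OF U, of "pd _ fc" "\<lambda>y. pd _ f y $ c"] pd_fc pd_nth di dj U)
    ultimately show ?thesis by simp
  qed
  then show ?thesis by (simp add: vec_eq_iff)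
qed

lemma matrix_inv_mult:
  fixes G :: "real^'n::finite^'n"
  assumes "det G \<noteq> 0"
  shows "G ** matrix_inv G = mat 1" "matrix_inv G ** G = mat 1"
proof -
  have "\<exists>A'. G ** A' = mat 1 \<and> A' ** G = mat 1"
    using assms invertible_det_nz unfolding invertible_def by blast
  then have "G ** matrix_inv G = mat 1 \<and> matrix_inv G ** G = mat 1"
    unfolding matrix_inv_def by (rule someI_ex)
  then show "G ** matrix_inv G = mat 1" "matrix_inv G ** G = mat 1" by auto
qed

lemma inverse_of_symmetric:
  fixes G Gi :: "real^'n::finite^'n"
  assumes "transpose G = G" "G ** Gi = mat 1" "Gi ** G = mat 1"
  shows "transpose Gi = Gi"
proof -
  have "G ** transpose Gi = mat 1"
    using arg_cong[OF assms(3), of transpose] by (simp add: matrix_transpose_mul assms(1))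
  then have "Gi ** (G ** transpose Gi) = Gi" by simp
  then show ?thesis by (simp add: matrix_mul_assoc assms(3))
qed

definition coord_vec :: "(real^'n::finite \<Rightarrow> real^'m::finite) \<Rightarrow> 'n \<Rightarrow> real^'m" where
  "coord_vec D p = D (axis p 1)"

definition gram :: "(real^'n::finite \<Rightarrow> real^'m::finite) \<Rightarrow> real^'n^'n" where
  "gram D = (\<chi> i j. coord_vec D i \<bullet> coord_vec D j)"

lemma linear_axis_expansion:
  fixes D :: "real^'n::finite \<Rightarrow> real^'m::finite"
  assumes "linear D"
  shows "D v = (\<Sum>p\<in>UNIV. v$p *\<^sub>R coord_vec D p)"
proof -
  have "D v = D (\<Sum>p\<in>UNIV. v$p *\<^sub>R axis p 1)"
    using basis_expansion[of v] by (simp add: scalar_mult_eq_scaleR)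
  then show ?thesis
    using assms by (simp add: linear_sum linear_scale coord_vec_def)
qed

context
  fixes D :: "real^'n::finite \<Rightarrow> real^'m::finite" and \<nu> :: "real^'m"
  assumes linD: "linear D" and injD: "inj D" and unit: "norm \<nu> = 1"
    and normal: "\<And>p. \<nu> \<bullet> coord_vec D p = 0" and card: "CARD('m) = CARD('n) + 1"
begin

lemma gram_det_nonzero: "det (gram D) \<noteq> 0"
proof -
  have gram_mult: "(gram D *v v) $ i = coord_vec D i \<bullet> D v" for v i
    by (simp add: gram_def matrix_vector_mult_def linear_axis_expansion[OF linD, of v]
        inner_sum_right mult.commute)
  have "inj ((*v) (gram D))"
    unfolding linear_injective_0[OF matrix_vector_mul_linear]
  proof (intro allI impI)
    fix v assume "gram D *v v = 0"
    then have "\<forall>i. coord_vec D i \<bullet> D v = 0" using gram_mult by (metis vec_eq_iff zero_index)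
    then have "D v \<bullet> D v = 0"
      by (subst (1) linear_axis_expansion[OF linD]) (simp add: inner_sum_left)
    then show "v = 0" using injD linD by (metis inner_eq_zero_iff linear_0 injD[unfolded inj_def])
  qed
  then show ?thesis using det_nz_iff_inj[OF matrix_vector_mul_linear, of "gram D"] by simp
qed

lemma normal_and_tangents_span: "span (insert \<nu> (range (coord_vec D))) = UNIV"
proof -
  have range: "range (coord_vec D) = D ` Basis"
    by (auto simp: Basis_vec_def coord_vec_def)
  have indep: "independent (range (coord_vec D))"
    unfolding range
    by (rule linear_independent_injective_image[OF linD independent_Basis])
       (metis injD inj_on_subset subset_UNIV)
  have card_range: "card (range (coord_vec D)) = CARD('n)"
  proof -
    have "inj (coord_vec D)"
      using injD unfolding inj_def coord_vec_def by (metis axis_eq_axis one_neq_zero)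
    then show ?thesis by (simp add: card_image)
  qed
  have \<nu>_span: "\<nu> \<notin> span (range (coord_vec D))"
  proof
    assume "\<nu> \<in> span (range (coord_vec D))"
    then have "\<nu> \<bullet> \<nu> = 0" using orthogonal_to_span normal unfolding orthogonal_def by blast
    then show False using unit by (simp add: norm_eq_sqrt_inner)
  qed
  then have "\<nu> \<notin> range (coord_vec D)" using span_base[of \<nu> "range (coord_vec D)"] by blast
  then have "card (insert \<nu> (range (coord_vec D))) = dim (UNIV :: (real^'m) set)"
    using card_range card by (simp add: card_insert_disjoint)
  moreover have "independent (insert \<nu> (range (coord_vec D)))"
    by (rule independent_insertI[OF \<nu>_span indep])
  ultimately show ?thesis
    using card_eq_dim[of "insert \<nu> (range (coord_vec D))" UNIV] by auto
qed

lemma orthogonal_to_normal_and_tangents: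
  assumes "w \<bullet> \<nu> = 0" and "\<And>p. w \<bullet> coord_vec D p = 0"
  shows "w = 0"
proof -
  have "orthogonal w y" if "y \<in> insert \<nu> (range (coord_vec D))" for y
    using that assms by (auto simp: orthogonal_def inner_commute)
  then have "orthogonal w w"
    by (intro orthogonal_to_span[of w "insert \<nu> (range (coord_vec D))"])
       (simp_all add: normal_and_tangents_span)
  then have "w \<bullet> w = 0" by (simp add: orthogonal_def)
  then show ?thesis by simp
qed

lemma tangent_expansion:
  assumes inverse: "Gi ** gram D = mat 1" and Gi_sym: "transpose Gi = Gi"
    and w_tangent: "w \<bullet> \<nu> = 0"
  shows "w = (\<Sum>l\<in>UNIV. \<Sum>m\<in>UNIV. (Gi$l$m * (w \<bullet> coord_vec D m)) *\<^sub>R coord_vec D l)"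
proof -
  define r where "r = w - (\<Sum>l\<in>UNIV. \<Sum>m\<in>UNIV. (Gi$l$m * (w \<bullet> coord_vec D m)) *\<^sub>R coord_vec D l)"
  have "\<nu> \<bullet> r = 0"
    using normal w_tangent by (simp add: r_def inner_diff_right inner_sum_right inner_commute)
  then have "r \<bullet> \<nu> = 0" by (simp add: inner_commute)
  moreover have "r \<bullet> coord_vec D p = 0" for p
  proof -
    have Gi_gram: "(\<Sum>l\<in>UNIV. Gi$m$l * gram D $l$p) = (if m = p then 1 else 0)" for m
      using arg_cong[OF inverse, of "\<lambda>A. A $ m $ p"] by (simp add: matrix_matrix_mult_def mat_def)
    have Gi_entry: "Gi$l$m = Gi$m$l" for l m
      using arg_cong[OF Gi_sym, of "\<lambda>A. A $ l $ m"] by (simp add: transpose_def)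
    have "(\<Sum>l\<in>UNIV. \<Sum>m\<in>UNIV. Gi$l$m * (w \<bullet> coord_vec D m) * (coord_vec D l \<bullet> coord_vec D p))
        = (\<Sum>m\<in>UNIV. (w \<bullet> coord_vec D m) * (\<Sum>l\<in>UNIV. Gi$m$l * gram D $l$p))"
      by (subst sum.swap) (simp add: gram_def sum_distrib_left Gi_entry mult_ac)
    also have "\<dots> = w \<bullet> coord_vec D p"
      by (simp add: Gi_gram if_distrib cong: if_cong)
    finally show ?thesis by (simp add: r_def inner_diff_left inner_sum_left)
  qed
  ultimately have "r = 0" by (rule orthogonal_to_normal_and_tangents)
  then show ?thesis by (simp add: r_def)
qed

end

text \<open>Matrix identities behind the covariant derivatives of \<open>H = g\<^sup>i\<^sup>jh\<^sub>i\<^sub>j\<close> and of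
  \<open>|T|\<^sup>2 = g\<^sup>i\<^sup>i\<^sup>'g\<^sup>j\<^sup>j\<^sup>'T\<^sub>i\<^sub>jT\<^sub>i\<^sub>'\<^sub>j\<^sub>'\<close>: if the metric varies as \<open>dG = C\<^sup>TG + GC\<close> (with
  \<open>C\<^sup>l\<^sub>i = \<Gamma>\<^sup>l\<^sub>k\<^sub>i\<close>), then the ordinary derivatives of these contractions are the
  contractions of \<open>dh - C\<^sup>Th - hC\<close>, the matrix form of the covariant derivative.\<close>

lemma matrix_neg_mult: "(- A) ** (B::real^'n::finite^'n) = - (A ** B)"
  by (simp add: matrix_matrix_mult_def vec_eq_iff sum_negf)

lemma matrix_mult_neg: "A ** (- B::real^'n::finite^'n) = - (A ** B)"
  by (simp add: matrix_matrix_mult_def vec_eq_iff sum_negf)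

lemma matrix_diff_ldistrib: "A ** (B - C) = A ** B - A ** (C::real^'n::finite^'n)"
  by (simp add: matrix_matrix_mult_def vec_eq_iff sum_subtractf algebra_simps)

lemma matrix_diff_rdistrib: "(A - B) ** C = A ** C - B ** (C::real^'n::finite^'n)"
  by (simp add: matrix_matrix_mult_def vec_eq_iff sum_subtractf algebra_simps)

lemma matrix_add_rdistrib: "(A + B) ** C = A ** C + B ** (C::real^'n::finite^'n)"
  by (simp add: matrix_matrix_mult_def vec_eq_iff sum.distrib algebra_simps)

lemma trace_neg: "trace (- A) = - trace (A::real^'n::finite^'n)"
  by (simp add: trace_def sum_negf)

lemma trace_transpose: "trace (transpose A) = trace (A::real^'n::finite^'n)"
  by (simp add: trace_def transpose_def)

lemma transpose_diff: "transpose (A - B) = transpose A - transpose (B::real^'n::finite^'n)"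
  by (simp add: transpose_def vec_eq_iff)

lemma transpose_add: "transpose (A + B) = transpose A + transpose (B::real^'n::finite^'n)"
  by (simp add: transpose_def vec_eq_iff)

lemma transpose_neg: "transpose (- A) = - transpose (A::real^'n::finite^'n)"
  by (simp add: transpose_def vec_eq_iff)

definition contract2 :: "real^'n::finite^'n \<Rightarrow> real^'n^'n \<Rightarrow> real" where
  "contract2 A B = (\<Sum>i\<in>UNIV. \<Sum>j\<in>UNIV. A$i$j * B$i$j)"

definition contract4 :: "real^'n::finite^'n \<Rightarrow> real^'n^'n \<Rightarrow> real^'n^'n \<Rightarrow> real^'n^'n \<Rightarrow> real" where
  "contract4 A B P R = (\<Sum>i\<in>UNIV. \<Sum>i'\<in>UNIV. \<Sum>j\<in>UNIV. \<Sum>j'\<in>UNIV. A$i$i' * B$j$j' * P$i$j * R$i'$j')"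

lemma contract2_trace: "contract2 A B = trace (A ** transpose B)"
  by (simp add: contract2_def trace_def matrix_matrix_mult_def transpose_def)

lemma contract2_diff: "contract2 A (B - C) = contract2 A B - contract2 A C"
  by (simp add: contract2_def algebra_simps sum_subtractf)

lemma contract4_trace: "contract4 A B P R = trace (A ** (R ** transpose B ** transpose P))"
proof -
  have "(\<Sum>j\<in>UNIV. \<Sum>j'\<in>UNIV. A$i$i' * B$j$j' * P$i$j * R$i'$j')
      = A$i$i' * (P ** B ** transpose R)$i$i'" for i i'
    by (subst sum.swap)
       (simp add: matrix_matrix_mult_def transpose_def sum_distrib_left sum_distrib_right mult_ac)
  then have "contract4 A B P R = contract2 A (P ** B ** transpose R)"
    by (simp add: contract4_def contract2_def)
  then show ?thesis by (simp add: contract2_trace matrix_transpose_mul matrix_mul_assoc)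
qed

lemma inverse_derivative_form:
  fixes G Gi dG dGi C :: "real^'n::finite^'n"
  assumes inverse: "Gi ** G = mat 1" "G ** Gi = mat 1"
    and dGi: "dGi = - (Gi ** dG ** Gi)" and dG: "dG = transpose C ** G + G ** C"
  shows "dGi = - (Gi ** transpose C + C ** Gi)"
proof -
  have "Gi ** dG ** Gi = Gi ** transpose C ** (G ** Gi) + (Gi ** G) ** C ** Gi"
    by (simp add: dG matrix_add_ldistrib matrix_add_rdistrib matrix_mul_assoc)
  also have "\<dots> = Gi ** transpose C + C ** Gi" by (simp add: inverse)
  finally show ?thesis by (simp add: dGi)
qed

lemma trace_derivative:
  fixes Gi h dh dGi C :: "real^'n::finite^'n"
  assumes h_sym: "transpose h = h" and dGi: "dGi = - (Gi ** transpose C + C ** Gi)"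
  shows "contract2 dGi h + contract2 Gi dh = contract2 Gi (dh - transpose C ** h - h ** C)"
proof -
  have "contract2 dGi h = - trace (Gi ** transpose C ** h) - trace (C ** Gi ** h)"
    by (simp add: contract2_trace h_sym dGi matrix_neg_mult matrix_add_rdistrib matrix_diff_rdistrib
        trace_add trace_sub trace_neg)
  moreover have "contract2 Gi (transpose C ** h) = trace (C ** Gi ** h)"
  proof -
    have "contract2 Gi (transpose C ** h) = trace ((Gi ** h) ** C)"
      by (simp add: contract2_trace matrix_transpose_mul h_sym matrix_mul_assoc)
    then show ?thesis by (simp add: trace_mul_sym[of _ C] matrix_mul_assoc)
  qed
  moreover have "contract2 Gi (h ** C) = trace (Gi ** transpose C ** h)"
    by (simp add: contract2_trace matrix_transpose_mul h_sym matrix_mul_assoc)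
  ultimately show ?thesis by (simp add: contract2_diff)
qed

lemma cyclic_traces:
  fixes Gi T C :: "real^'n::finite^'n"
  assumes Gi_sym: "transpose Gi = Gi" and T_sym: "transpose T = T"
  shows "trace (Gi ** transpose C ** T ** Gi ** T) = trace (C ** Gi ** T ** Gi ** T)"
    and "trace (Gi ** T ** C ** Gi ** T) = trace (C ** Gi ** T ** Gi ** T)"
    and "trace (Gi ** T ** Gi ** transpose C ** T) = trace (C ** Gi ** T ** Gi ** T)"
    and "trace (Gi ** T ** Gi ** T ** C) = trace (C ** Gi ** T ** Gi ** T)"
proof -
  have cycle: "trace (A ** B) = trace (B ** A)" for A B :: "real^'n^'n" by (rule trace_mul_sym)
  have last: "trace (Gi ** T ** Gi ** T ** C) = trace (C ** Gi ** T ** Gi ** T)"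
    using cycle[of "Gi ** T ** Gi ** T" C] by (simp add: matrix_mul_assoc)
  show "trace (Gi ** T ** Gi ** T ** C) = trace (C ** Gi ** T ** Gi ** T)" by (rule last)
  have "trace (Gi ** transpose C ** T ** Gi ** T) = trace (transpose (Gi ** transpose C ** T ** Gi ** T))"
    by (simp add: trace_transpose)
  also have "\<dots> = trace ((T ** Gi ** T) ** (C ** Gi))"
    by (simp add: matrix_transpose_mul Gi_sym T_sym matrix_mul_assoc)
  also have "\<dots> = trace (C ** Gi ** T ** Gi ** T)"
    using cycle[of "T ** Gi ** T" "C ** Gi"] by (simp add: matrix_mul_assoc)
  finally show "trace (Gi ** transpose C ** T ** Gi ** T) = trace (C ** Gi ** T ** Gi ** T)" .
  show "trace (Gi ** T ** C ** Gi ** T) = trace (C ** Gi ** T ** Gi ** T)"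
    using cycle[of "Gi ** T" "C ** Gi ** T"] by (simp add: matrix_mul_assoc)
  have "trace (Gi ** T ** Gi ** transpose C ** T) = trace ((transpose C ** T) ** (Gi ** T ** Gi))"
    using cycle[of "Gi ** T ** Gi" "transpose C ** T"] by (simp add: matrix_mul_assoc)
  also have "\<dots> = trace (transpose ((transpose C ** T) ** (Gi ** T ** Gi)))"
    by (simp add: trace_transpose)
  also have "\<dots> = trace (Gi ** T ** Gi ** T ** C)"
    by (simp add: matrix_transpose_mul Gi_sym T_sym matrix_mul_assoc)
  finally show "trace (Gi ** T ** Gi ** transpose C ** T) = trace (C ** Gi ** T ** Gi ** T)"
    using last by simp
qed

lemma norm_derivative:
  fixes Gi T dT dGi C :: "real^'n::finite^'n"
  assumes Gi_sym: "transpose Gi = Gi" and T_sym: "transpose T = T" and dT_sym: "transpose dT = dT"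
    and dGi: "dGi = - (Gi ** transpose C + C ** Gi)"
  shows "contract4 dGi Gi T T + contract4 Gi dGi T T + contract4 Gi Gi dT T + contract4 Gi Gi T dT
     = 2 * contract4 Gi Gi (dT - transpose C ** T - T ** C) T"
proof -
  note traces = cyclic_traces[OF Gi_sym T_sym, of C]
  have "transpose dGi = - (transpose (Gi ** transpose C) + transpose (C ** Gi))"
    by (simp only: dGi transpose_neg transpose_add)
  then have dGi_sym: "transpose dGi = dGi"
    by (simp add: dGi matrix_transpose_mul Gi_sym add.commute)
  have "trace (Gi ** (dT ** Gi ** T)) = trace ((Gi ** T) ** (Gi ** dT))"
    using trace_mul_sym[of "Gi ** dT" "Gi ** T"] by (simp add: matrix_mul_assoc)
  then have "contract4 Gi Gi dT T + contract4 Gi Gi T dT = 2 * trace (Gi ** (T ** Gi ** dT))"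
    by (simp add: contract4_trace Gi_sym T_sym dT_sym matrix_mul_assoc)
  moreover have "contract4 dGi Gi T T = - trace (Gi ** transpose C ** T ** Gi ** T) - trace (C ** Gi ** T ** Gi ** T)"
    by (simp add: contract4_trace Gi_sym T_sym dGi matrix_neg_mult matrix_add_rdistrib
        matrix_diff_rdistrib trace_add trace_sub trace_neg matrix_mul_assoc)
  moreover have "contract4 Gi dGi T T = - trace (Gi ** T ** Gi ** transpose C ** T) - trace (Gi ** T ** C ** Gi ** T)"
    unfolding contract4_trace Gi_sym T_sym dGi_sym
    by (simp add: dGi matrix_neg_mult matrix_mult_neg matrix_add_rdistrib matrix_add_ldistrib
        matrix_diff_rdistrib matrix_diff_ldistrib trace_add trace_sub trace_neg matrix_mul_assoc)
  moreover have "contract4 Gi Gi (dT - transpose C ** T - T ** C) T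
     = trace (Gi ** (T ** Gi ** dT)) - trace (Gi ** T ** Gi ** T ** C) - trace (Gi ** T ** Gi ** transpose C ** T)"
    by (simp add: contract4_trace Gi_sym T_sym dT_sym transpose_diff matrix_transpose_mul
        matrix_diff_ldistrib trace_sub matrix_mul_assoc)
  ultimately show ?thesis using traces by simp
qed

lemma differentiable_det:
  fixes F :: "real^'k::finite \<Rightarrow> real^'n::finite^'n"
  assumes "\<And>i j. (\<lambda>y. F y $ i $ j) differentiable (at x)"
  shows "(\<lambda>y. det (F y)) differentiable (at x)"
  unfolding det_def
  by (intro differentiable_sum ballI differentiable_mult differentiable_const differentiable_prod assms)
     (simp add: finite_permutations)

locale smooth_patch =
  fixes U :: "(real^'n::finite) set" and X \<nu> :: "real^'n \<Rightarrow> real^'m::finite"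
  assumes patch: "hypersurface_patch U X \<nu>"
begin

lemma open_U: "open U" and card_m: "CARD('m) = CARD('n) + 1"
  and smooth_X: "smooth_on U X" and smooth_\<nu>: "smooth_on U \<nu>"
  and immersion: "\<And>y. y \<in> U \<Longrightarrow> inj (frechet_derivative X (at y))"
  and unit_normal: "\<And>y. y \<in> U \<Longrightarrow> norm (\<nu> y) = 1"
  and normal: "\<And>y i. y \<in> U \<Longrightarrow> \<nu> y \<bullet> pd i X y = 0"
  using patch unfolding hypersurface_patch_def by auto

lemma differentiable_X: "y \<in> U \<Longrightarrow> X differentiable (at y)"
  by (rule smooth_on_differentiable[OF smooth_X open_U])

lemma differentiable_X1: "y \<in> U \<Longrightarrow> pd i X differentiable (at y)"
  by (rule smooth_on_differentiable[OF smooth_on_pd[OF smooth_X] open_U])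

lemma differentiable_X2: "y \<in> U \<Longrightarrow> pd i (pd j X) differentiable (at y)"
  by (rule smooth_on_differentiable[OF smooth_on_pd[OF smooth_on_pd[OF smooth_X]] open_U])

lemma differentiable_\<nu>: "y \<in> U \<Longrightarrow> \<nu> differentiable (at y)"
  by (rule smooth_on_differentiable[OF smooth_\<nu> open_U])

lemma pd2_X_sym: "y \<in> U \<Longrightarrow> pd i (pd j X) y = pd j (pd i X) y"
  by (rule pd_commute_vec[OF open_U _ differentiable_X differentiable_X1 differentiable_X1])

lemma pd3_X_sym: "y \<in> U \<Longrightarrow> pd k (pd i (pd j X)) y = pd i (pd k (pd j X)) y"
  by (rule pd_commute_vec[OF open_U _ differentiable_X1 differentiable_X2 differentiable_X2])

lemma weingarten: "y \<in> U \<Longrightarrow> pd i \<nu> y \<bullet> pd p X y = - hh X \<nu> y $ i $ p"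
proof -
  assume y: "y \<in> U"
  have "pd i (\<lambda>z. \<nu> z \<bullet> pd p X z) y = pd i (\<lambda>z. 0) y"
    by (rule pd_cong_open[OF open_U y]) (simp add: normal)
  then have "pd i \<nu> y \<bullet> pd p X y + \<nu> y \<bullet> pd i (pd p X) y = 0"
    by (simp add: pd_inner[OF differentiable_\<nu>[OF y] differentiable_X1[OF y]] pd_const)
  then show ?thesis by (simp add: hh_def inner_commute)
qed

lemma normal_derivative_tangent: "y \<in> U \<Longrightarrow> pd i \<nu> y \<bullet> \<nu> y = 0"
proof -
  assume y: "y \<in> U"
  have "pd i (\<lambda>z. \<nu> z \<bullet> \<nu> z) y = pd i (\<lambda>z. 1) y"
    by (rule pd_cong_open[OF open_U y]) (simp add: unit_normal dot_square_norm)
  then have "pd i \<nu> y \<bullet> \<nu> y + \<nu> y \<bullet> pd i \<nu> y = 0"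
    by (simp add: pd_inner[OF differentiable_\<nu>[OF y] differentiable_\<nu>[OF y]] pd_const)
  then show ?thesis by (simp add: inner_commute)
qed

lemma hh_sym: "y \<in> U \<Longrightarrow> hh X \<nu> y $ i $ j = hh X \<nu> y $ j $ i"
  by (simp add: hh_def pd2_X_sym)

lemma gm_sym: "gm X y $ i $ j = gm X y $ j $ i"
  by (simp add: gm_def inner_commute)

lemma gm_transpose: "transpose (gm X y) = gm X y"
  by (simp add: transpose_def vec_eq_iff gm_sym)

lemma hh_transpose: "y \<in> U \<Longrightarrow> transpose (hh X \<nu> y) = hh X \<nu> y"
  unfolding transpose_def by (simp add: vec_eq_iff hh_sym[of y])

lemma gm_gram: "gm X y = gram (frechet_derivative X (at y))"
  by (simp add: gm_def gram_def coord_vec_def pd_def)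

lemma linear_dX: "y \<in> U \<Longrightarrow> linear (frechet_derivative X (at y))"
  using has_frechet_derivative[OF differentiable_X] has_derivative_linear by blast

lemma normal_dX: "y \<in> U \<Longrightarrow> \<nu> y \<bullet> coord_vec (frechet_derivative X (at y)) p = 0"
  using normal[of y p] by (simp add: pd_def coord_vec_def)

lemma gm_det:
  assumes y: "y \<in> U" shows "det (gm X y) \<noteq> 0"
  unfolding gm_gram
  by (rule gram_det_nonzero[OF linear_dX[OF y] immersion[OF y] unit_normal[OF y] normal_dX[OF y] card_m])

lemma gm_inverse: "y \<in> U \<Longrightarrow> gm X y ** ginv X y = mat 1" "y \<in> U \<Longrightarrow> ginv X y ** gm X y = mat 1"
  using matrix_inv_mult[OF gm_det] by (simp_all add: ginv_def)

lemma ginv_transpose: "y \<in> U \<Longrightarrow> transpose (ginv X y) = ginv X y"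
  by (rule inverse_of_symmetric[OF gm_transpose gm_inverse])

lemma ginv_sym: "y \<in> U \<Longrightarrow> ginv X y $ i $ j = ginv X y $ j $ i"
  using arg_cong[OF ginv_transpose, of y "\<lambda>A. A $ j $ i"] by (simp add: transpose_def)

lemma ginv_gm: "y \<in> U \<Longrightarrow> (\<Sum>l\<in>UNIV. ginv X y $ m $ l * gm X y $ l $ j) = (if m = j then 1 else 0)"
  using arg_cong[OF gm_inverse(2), of y "\<lambda>A. A $ m $ j"] by (simp add: matrix_matrix_mult_def mat_def)

lemma shapeA_eq: "y \<in> U \<Longrightarrow> shapeA X \<nu> y = ginv X y ** hh X \<nu> y"
  unfolding shapeA_def matrix_matrix_mult_def
  by (simp add: weingarten sum_negf vec_eq_iff hh_sym[of y])

lemma meanH_eq: "y \<in> U \<Longrightarrow> meanH X \<nu> y = (\<Sum>i\<in>UNIV. \<Sum>j\<in>UNIV. ginv X y $ i $ j * hh X \<nu> y $ i $ j)"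
  unfolding meanH_def shapeA_def by (simp add: weingarten sum_negf hh_sym[of y])


definition "dgm k x = (\<chi> i j. pd k (\<lambda>y. gm X y $ i $ j) x)"
definition "dginv k x = (\<chi> i j. pd k (\<lambda>y. ginv X y $ i $ j) x)"
definition "dhh k x = (\<chi> i j. pd k (\<lambda>y. hh X \<nu> y $ i $ j) x)"
definition "christ_matrix k x = (\<chi> l i. christ X x l k i)"

lemma differentiable_gm: "x \<in> U \<Longrightarrow> (\<lambda>y. gm X y $ i $ j) differentiable (at x)"
  unfolding gm_def by (simp add: differentiable_inner differentiable_X1)

lemma pd_gm: "x \<in> U \<Longrightarrow>
    pd k (\<lambda>y. gm X y $ i $ j) x = pd k (pd i X) x \<bullet> pd j X x + pd i X x \<bullet> pd k (pd j X) x"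
  unfolding gm_def by (simp add: pd_inner differentiable_X1)

lemma differentiable_hh: "x \<in> U \<Longrightarrow> (\<lambda>y. hh X \<nu> y $ i $ j) differentiable (at x)"
  unfolding hh_def by (simp add: differentiable_inner differentiable_X2 differentiable_\<nu>)

lemma pd_hh: "x \<in> U \<Longrightarrow>
    pd k (\<lambda>y. hh X \<nu> y $ i $ j) x = pd k (pd i (pd j X)) x \<bullet> \<nu> x + pd i (pd j X) x \<bullet> pd k \<nu> x"
  unfolding hh_def by (simp add: pd_inner differentiable_X2 differentiable_\<nu>)

text \<open>Smoothness of \<open>g\<^sup>-\<^sup>1\<close> follows from Cramer's rule.\<close>
lemma differentiable_ginv:
  assumes x: "x \<in> U" shows "(\<lambda>y. ginv X y $ a $ b) differentiable (at x)"
proof -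
  have cramer_entry: "ginv X y $ a $ b = det (\<chi> i l. if l = a then axis b 1 $ i else gm X y $ i $ l) / det (gm X y)"
    if y: "y \<in> U" for y
  proof -
    have "gm X y *v (ginv X y *v axis b 1) = axis b 1"
      by (simp add: matrix_vector_mul_assoc gm_inverse[OF y])
    then have "ginv X y *v axis b 1 = (\<chi> k. det (\<chi> i l. if l = k then axis b 1 $ i else gm X y $ i $ l) / det (gm X y))"
      using cramer[OF gm_det[OF y]] by blast
    then show ?thesis
      by (simp add: vec_eq_iff matrix_vector_mult_def axis_def if_distrib cong: if_cong)
  qed
  have "(\<lambda>y. det (\<chi> i l. if l = a then axis b 1 $ i else gm X y $ i $ l) / det (gm X y)) differentiable (at x)"
  proof (intro differentiable_divide differentiable_det)
    show "(\<lambda>y. (\<chi> i l. if l = a then axis b 1 $ i else gm X y $ i $ l) $ i $ j) differentiable (at x)" for i j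
      using differentiable_gm[OF x] by (cases "j = a") simp_all
  qed (simp_all add: differentiable_gm[OF x] gm_det[OF x])
  then show ?thesis
    by (rule differentiable_cong_open[OF open_U x, rotated]) (simp add: cramer_entry)
qed

text \<open>Differentiating \<open>g\<^sup>-\<^sup>1 g = 1\<close> gives \<open>\<partial>\<^sub>kg\<^sup>-\<^sup>1 = -g\<^sup>-\<^sup>1 (\<partial>\<^sub>kg) g\<^sup>-\<^sup>1\<close>.\<close>
lemma dginv_eq: assumes x: "x \<in> U" shows "dginv k x = - (ginv X x ** dgm k x ** ginv X x)"
proof -
  have "(dginv k x ** gm X x + ginv X x ** dgm k x) $ a $ c = 0" for a c
  proof -
    have "pd k (\<lambda>y. \<Sum>b\<in>UNIV. ginv X y $ a $ b * gm X y $ b $ c) x = pd k (\<lambda>y. if a = c then 1 else 0) x"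
      by (rule pd_cong_open[OF open_U x]) (simp add: ginv_gm)
    then show ?thesis
      by (simp add: pd_sum pd_mult differentiable_mult differentiable_ginv[OF x] differentiable_gm[OF x]
          pd_const matrix_matrix_mult_def dginv_def dgm_def sum.distrib)
  qed
  then have "dginv k x ** gm X x = - (ginv X x ** dgm k x)"
    by (simp add: vec_eq_iff eq_neg_iff_add_eq_0)
  then have "dginv k x ** (gm X x ** ginv X x) = - (ginv X x ** dgm k x) ** ginv X x"
    by (simp add: matrix_mul_assoc)
  then show ?thesis by (simp add: gm_inverse[OF x] matrix_neg_mult matrix_mul_assoc)
qed

lemma christ_eq: "x \<in> U \<Longrightarrow> christ X x l i j = (\<Sum>m\<in>UNIV. ginv X x $ l $ m * (pd i (pd j X) x \<bullet> pd m X x))"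
proof -
  assume x: "x \<in> U"
  have "pd i (\<lambda>y. gm X y $ j $ m) x + pd j (\<lambda>y. gm X y $ i $ m) x - pd m (\<lambda>y. gm X y $ i $ j) x
     = 2 * (pd i (pd j X) x \<bullet> pd m X x)" for m
    by (simp add: pd_gm[OF x] pd2_X_sym[OF x, of i j] pd2_X_sym[OF x, of m i] pd2_X_sym[OF x, of m j]
        inner_commute)
  then show ?thesis by (simp add: christ_def sum_distrib_left)
qed

lemma christ_sym: "x \<in> U \<Longrightarrow> christ X x l i j = christ X x l j i"
  by (simp add: christ_eq pd2_X_sym)

lemma dgm_eq: assumes x: "x \<in> U" shows "dgm k x = transpose (christ_matrix k x) ** gm X x + gm X x ** christ_matrix k x"
proof -
  have lowered: "(\<Sum>l\<in>UNIV. christ X x l k i * gm X x $ l $ j) = pd k (pd i X) x \<bullet> pd j X x" for i j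
  proof -
    have "christ X x l k i = (\<Sum>m\<in>UNIV. ginv X x $ m $ l * (pd k (pd i X) x \<bullet> pd m X x))" for l
      unfolding christ_eq[OF x] by (rule sum.cong) (simp_all add: ginv_sym[OF x, of l])
    then have "(\<Sum>l\<in>UNIV. christ X x l k i * gm X x $ l $ j)
       = (\<Sum>l\<in>UNIV. \<Sum>m\<in>UNIV. ginv X x $ m $ l * gm X x $ l $ j * (pd k (pd i X) x \<bullet> pd m X x))"
      by (simp add: sum_distrib_right sum_distrib_left mult_ac)
    also have "\<dots> = (\<Sum>m\<in>UNIV. (\<Sum>l\<in>UNIV. ginv X x $ m $ l * gm X x $ l $ j) * (pd k (pd i X) x \<bullet> pd m X x))"
      by (subst sum.swap) (simp add: sum_distrib_right)
    finally show ?thesis by (simp add: ginv_gm[OF x] if_distrib[of "\<lambda>c. c * _"] cong: if_cong)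
  qed
  show ?thesis
    using lowered lowered[of j i for i j]
    by (simp add: vec_eq_iff dgm_def pd_gm[OF x] matrix_matrix_mult_def transpose_def christ_matrix_def
        gm_sym[of x] mult.commute inner_commute)
qed


text \<open>Gauss formula for the normal component: \<open>\<langle>\<partial>\<^sub>i\<partial>\<^sub>jX, \<partial>\<^sub>k\<nu>\<rangle> = -h\<^sub>k\<^sub>m\<Gamma>\<^sup>m\<^sub>i\<^sub>j\<close>, obtained by
  expanding the tangent vector \<open>\<partial>\<^sub>k\<nu>\<close> in the coordinate frame.\<close>
lemma second_derivative_normal_derivative:
  assumes x: "x \<in> U"
  shows "pd i (pd j X) x \<bullet> pd k \<nu> x = - (\<Sum>m\<in>UNIV. hh X \<nu> x $ k $ m * christ X x m i j)"
proof -
  define D where "D = frechet_derivative X (at x)"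
  have coord: "coord_vec D m = pd m X x" for m by (simp add: coord_vec_def D_def pd_def)
  have "pd k \<nu> x = (\<Sum>l\<in>UNIV. \<Sum>m\<in>UNIV. (ginv X x $ l $ m * (pd k \<nu> x \<bullet> coord_vec D m)) *\<^sub>R coord_vec D l)"
    using tangent_expansion[OF linear_dX[OF x] immersion[OF x] unit_normal[OF x] normal_dX[OF x] card_m,
        folded D_def] gm_inverse[OF x] ginv_transpose[OF x] normal_derivative_tangent[OF x] gm_gram
    by (simp add: D_def)
  then have "pd i (pd j X) x \<bullet> pd k \<nu> x
     = (\<Sum>l\<in>UNIV. \<Sum>m\<in>UNIV. ginv X x $ l $ m * (- hh X \<nu> x $ k $ m) * (pd i (pd j X) x \<bullet> pd l X x))"
    by (simp add: inner_sum_right coord weingarten[OF x] mult_ac)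
  also have "\<dots> = (\<Sum>m\<in>UNIV. - (hh X \<nu> x $ k $ m * christ X x m i j))"
    by (subst sum.swap)
       (simp add: christ_eq[OF x] sum_distrib_left ginv_sym[OF x] mult_ac sum_negf)
  finally show ?thesis by (simp add: sum_negf)
qed

lemma codazzi:
  assumes x: "x \<in> U"
  shows "cov2 X (hh X \<nu>) x k i j = cov2 X (hh X \<nu>) x i k j"
proof -
  have "pd k (\<lambda>y. hh X \<nu> y $ i $ j) x = pd k (pd i (pd j X)) x \<bullet> \<nu> x - (\<Sum>m\<in>UNIV. hh X \<nu> x $ k $ m * christ X x m i j)"
    and "pd i (\<lambda>y. hh X \<nu> y $ k $ j) x = pd k (pd i (pd j X)) x \<bullet> \<nu> x - (\<Sum>m\<in>UNIV. hh X \<nu> x $ i $ m * christ X x m k j)"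
    by (simp_all add: pd_hh[OF x] second_derivative_normal_derivative[OF x] pd3_X_sym[OF x, of k i j])
  then show ?thesis
    unfolding cov2_def by (simp add: christ_sym[OF x, of _ k i] algebra_simps)
qed

lemma cov2_hh_sym:
  assumes x: "x \<in> U"
  shows "cov2 X (hh X \<nu>) x k i j = cov2 X (hh X \<nu>) x k j i"
proof -
  have "pd k (\<lambda>y. hh X \<nu> y $ i $ j) x = pd k (\<lambda>y. hh X \<nu> y $ j $ i) x"
    by (rule pd_cong_open[OF open_U x]) (simp add: hh_sym)
  then show ?thesis
    unfolding cov2_def by (simp add: hh_sym[OF x, of _ j] hh_sym[OF x, of i] algebra_simps)
qed

lemma differentiable_meanH: "x \<in> U \<Longrightarrow> meanH X \<nu> differentiable (at x)"
proof -
  assume x: "x \<in> U"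
  have "(\<lambda>y. \<Sum>i\<in>UNIV. \<Sum>j\<in>UNIV. ginv X y $ i $ j * hh X \<nu> y $ i $ j) differentiable (at x)"
    by (intro differentiable_sum ballI differentiable_mult differentiable_ginv[OF x] differentiable_hh[OF x])
       auto
  then show ?thesis
    by (rule differentiable_cong_open[OF open_U x, rotated]) (simp add: meanH_eq)
qed

lemma pd_meanH:
  assumes x: "x \<in> U"
  shows "pd k (meanH X \<nu>) x = (\<Sum>i\<in>UNIV. \<Sum>j\<in>UNIV. ginv X x $ i $ j * cov2 X (hh X \<nu>) x k i j)"
proof -
  have "pd k (meanH X \<nu>) x = pd k (\<lambda>y. \<Sum>i\<in>UNIV. \<Sum>j\<in>UNIV. ginv X y $ i $ j * hh X \<nu> y $ i $ j) x"
    by (rule pd_cong_open[OF open_U x]) (simp add: meanH_eq)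
  also have "\<dots> = contract2 (dginv k x) (hh X \<nu> x) + contract2 (ginv X x) (dhh k x)"
    by (simp add: pd_sum2 pd_mult differentiable_mult differentiable_ginv[OF x] differentiable_hh[OF x]
        contract2_def dginv_def dhh_def sum.distrib)
  also have "\<dots> = contract2 (ginv X x) (dhh k x - transpose (christ_matrix k x) ** hh X \<nu> x - hh X \<nu> x ** christ_matrix k x)"
    by (rule trace_derivative[OF hh_transpose[OF x]
          inverse_derivative_form[OF gm_inverse(2)[OF x] gm_inverse(1)[OF x] dginv_eq[OF x] dgm_eq[OF x]]])
  also have "\<dots> = (\<Sum>i\<in>UNIV. \<Sum>j\<in>UNIV. ginv X x $ i $ j * cov2 X (hh X \<nu>) x k i j)"
    by (simp add: contract2_def cov2_def dhh_def christ_matrix_def matrix_matrix_mult_def transpose_def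
        mult.commute)
  finally show ?thesis .
qed

lemma hcirc_entry: "(\<lambda>y. hcirc X \<nu> y $ i $ j) = (\<lambda>y. hh X \<nu> y $ i $ j - (1 / real CARD('n)) * meanH X \<nu> y * gm X y $ i $ j)"
  by (simp add: hcirc_def)

lemma differentiable_hcirc: "x \<in> U \<Longrightarrow> (\<lambda>y. hcirc X \<nu> y $ i $ j) differentiable (at x)"
  unfolding hcirc_entry
  by (intro differentiable_diff differentiable_mult differentiable_const differentiable_hh
      differentiable_meanH differentiable_gm) auto

lemma pd_hcirc:
  assumes x: "x \<in> U"
  shows "pd k (\<lambda>y. hcirc X \<nu> y $ i $ j) x = pd k (\<lambda>y. hh X \<nu> y $ i $ j) x
     - (1 / real CARD('n)) * (pd k (meanH X \<nu>) x * gm X x $ i $ j + meanH X \<nu> x * pd k (\<lambda>y. gm X y $ i $ j) x)"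
proof -
  have dm: "(\<lambda>y. (1 / real CARD('n)) * meanH X \<nu> y) differentiable (at x)"
    by (intro differentiable_mult differentiable_const differentiable_meanH[OF x])
  have "pd k (\<lambda>y. hcirc X \<nu> y $ i $ j) x
     = pd k (\<lambda>y. hh X \<nu> y $ i $ j) x - pd k (\<lambda>y. (1 / real CARD('n)) * meanH X \<nu> y * gm X y $ i $ j) x"
    unfolding hcirc_entry
    by (rule pd_diff[OF differentiable_hh[OF x]]) (intro differentiable_mult dm differentiable_gm[OF x])
  also have "pd k (\<lambda>y. (1 / real CARD('n)) * meanH X \<nu> y * gm X y $ i $ j) x
     = pd k (\<lambda>y. (1 / real CARD('n)) * meanH X \<nu> y) x * gm X x $ i $ j
       + (1 / real CARD('n)) * meanH X \<nu> x * pd k (\<lambda>y. gm X y $ i $ j) x"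
    by (rule pd_mult[OF dm differentiable_gm[OF x]])
  also have "pd k (\<lambda>y. (1 / real CARD('n)) * meanH X \<nu> y) x = (1 / real CARD('n)) * pd k (meanH X \<nu>) x"
    by (rule pd_cmult[OF differentiable_meanH[OF x]])
  finally show ?thesis by (simp add: algebra_simps)
qed

text \<open>Metric compatibility makes the covariant derivative of \<open>(H/n) g\<close> equal to
  \<open>(\<partial>\<^sub>kH/n) g\<close>.\<close>
lemma cov2_hcirc:
  assumes x: "x \<in> U"
  shows "cov2 X (hcirc X \<nu>) x k i j = cov2 X (hh X \<nu>) x k i j - pd k (meanH X \<nu>) x / real CARD('n) * gm X x $ i $ j"
proof -
  have "pd k (\<lambda>y. gm X y $ i $ j) x
      = (\<Sum>l\<in>UNIV. christ X x l k i * gm X x $ l $ j) + (\<Sum>l\<in>UNIV. christ X x l k j * gm X x $ i $ l)"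
    using arg_cong[OF dgm_eq[OF x], of "\<lambda>A. A $ i $ j"]
    by (simp add: dgm_def matrix_matrix_mult_def transpose_def christ_matrix_def mult.commute)
  then show ?thesis
    unfolding cov2_def pd_hcirc[OF x]
    by (simp add: hcirc_def algebra_simps sum_subtractf sum.distrib sum_distrib_left)
qed

lemma hcirc_transpose: "x \<in> U \<Longrightarrow> transpose (hcirc X \<nu> x) = hcirc X \<nu> x"
  unfolding transpose_def by (simp add: vec_eq_iff hcirc_def hh_sym[of x] gm_sym[of x])


definition normAcirc_sq :: "real^'n \<Rightarrow> real" where
  "normAcirc_sq y = tnorm2 X y (hcirc X \<nu> y)"

lemma differentiable_normAcirc_sq: "x \<in> U \<Longrightarrow> normAcirc_sq differentiable (at x)"
  unfolding normAcirc_sq_def[abs_def] tnorm2_def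
  by (intro differentiable_sum ballI differentiable_mult differentiable_ginv differentiable_hcirc) auto

lemma pd_normAcirc_sq:
  assumes x: "x \<in> U"
  shows "pd k normAcirc_sq x = 2 * (\<Sum>i\<in>UNIV. \<Sum>i'\<in>UNIV. \<Sum>j\<in>UNIV. \<Sum>j'\<in>UNIV.
      ginv X x $ i $ i' * ginv X x $ j $ j' * cov2 X (hcirc X \<nu>) x k i j * hcirc X \<nu> x $ i' $ j')"
proof -
  define T where "T = hcirc X \<nu> x"
  define dT where "dT = (\<chi> i j. pd k (\<lambda>y. hcirc X \<nu> y $ i $ j) x)"
  define Gi where "Gi = ginv X x"
  have dT_sym: "transpose dT = dT"
  proof -
    have "pd k (\<lambda>y. hcirc X \<nu> y $ i $ j) x = pd k (\<lambda>y. hcirc X \<nu> y $ j $ i) x" for i j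
      by (rule pd_cong_open[OF open_U x]) (simp add: hcirc_def hh_sym gm_sym)
    then show ?thesis by (simp add: dT_def transpose_def vec_eq_iff)
  qed
  have "pd k normAcirc_sq x = contract4 (dginv k x) Gi T T + contract4 Gi (dginv k x) T T
      + contract4 Gi Gi dT T + contract4 Gi Gi T dT"
    unfolding normAcirc_sq_def[abs_def] tnorm2_def
    by (simp add: pd_sum4 pd_mult differentiable_mult differentiable_ginv[OF x] differentiable_hcirc[OF x]
        contract4_def dginv_def Gi_def T_def dT_def sum.distrib algebra_simps)
  also have "\<dots> = 2 * contract4 Gi Gi (dT - transpose (christ_matrix k x) ** T - T ** christ_matrix k x) T"
    unfolding Gi_def T_def
    by (rule norm_derivative[OF ginv_transpose[OF x] hcirc_transpose[OF x] dT_sym[unfolded T_def]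
          inverse_derivative_form[OF gm_inverse(2)[OF x] gm_inverse(1)[OF x] dginv_eq[OF x] dgm_eq[OF x]]])
  also have "\<dots> = 2 * (\<Sum>i\<in>UNIV. \<Sum>i'\<in>UNIV. \<Sum>j\<in>UNIV. \<Sum>j'\<in>UNIV.
      ginv X x $ i $ i' * ginv X x $ j $ j' * cov2 X (hcirc X \<nu>) x k i j * hcirc X \<nu> x $ i' $ j')"
    by (simp add: contract4_def cov2_def dT_def T_def Gi_def christ_matrix_def matrix_matrix_mult_def
        transpose_def mult.commute)
  finally show ?thesis .
qed

lemma pd_normAcirc:
  assumes x: "x \<in> U" and pos: "normAcirc_sq x > 0"
  shows "pd k (normAcirc X \<nu>) x = (\<Sum>i\<in>UNIV. \<Sum>i'\<in>UNIV. \<Sum>j\<in>UNIV. \<Sum>j'\<in>UNIV.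
      ginv X x $ i $ i' * ginv X x $ j $ j' * cov2 X (hcirc X \<nu>) x k i j * hcirc X \<nu> x $ i' $ j')
      / normAcirc X \<nu> x"
proof -
  have "normAcirc X \<nu> = (\<lambda>y. sqrt (normAcirc_sq y))" by (simp add: normAcirc_def normAcirc_sq_def fun_eq_iff)
  then have "pd k (normAcirc X \<nu>) x = pd k normAcirc_sq x / (2 * sqrt (normAcirc_sq x))"
    using pd_sqrt[OF differentiable_normAcirc_sq[OF x] pos] by simp
  then show ?thesis by (simp add: pd_normAcirc_sq[OF x] normAcirc_def normAcirc_sq_def)
qed

lemma kato_at_point:
  assumes x: "x \<in> U" and nonzero: "normAcirc X \<nu> x \<noteq> 0"
    and orthonormal: "g_orthonormal X x e" and principal: "\<forall>j. principal_vector X \<nu> x (e j)"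
    and hyp: "(\<Sum>j\<in>UNIV. nabla_h_eee X \<nu> x (e j) * dir_deriv (e j) (meanH X \<nu>) x)
             \<le> (real CARD('n) + 1) / (2 * real CARD('n)) * gradnorm2 X (meanH X \<nu>) x"
  shows "t3norm2 X x (cov2 X (hcirc X \<nu>) x) \<ge> (1 + 1 / real CARD('n)) * gradnorm2 X (normAcirc X \<nu>) x"
proof -
  obtain lam where lam: "\<And>j. shapeA X \<nu> x *v e j = lam j *\<^sub>R e j"
    using principal unfolding principal_vector_def by metis
  interpret principal_frame "gm X x" "ginv X x" "hh X \<nu> x" e lam
    using gm_inverse[OF x] orthonormal lam
    by unfold_locales (simp_all add: g_orthonormal_def shapeA_eq[OF x])
  have "normAcirc_sq x = (\<Sum>a\<in>UNIV. (lam a - meanH X \<nu> x / real CARD('n))\<^sup>2)"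
    by (simp only: normAcirc_sq_def tnorm2_def hcirc_def vec_lambda_beta traceless_norm2)
  then have "normAcirc_sq x > 0"
    using nonzero by (simp add: normAcirc_def normAcirc_sq_def sum_nonneg order_less_le)
  then show ?thesis
    using kato_inequality[OF codazzi[OF x] cov2_hh_sym[OF x] pd_meanH[OF x] cov2_hcirc[OF x], of "normAcirc X \<nu> x"]
      nonzero pd_normAcirc[OF x] hyp
    by (simp add: normAcirc_def tnorm2_def hcirc_def t3norm2_def gradnorm2_def nabla_h_eee_def dir_deriv_def)
qed

end

theorem mainTheorem11:
  fixes U :: "(real^'n::finite) set"
    and X \<nu> :: "real^'n \<Rightarrow> real^'m::finite"
  assumes "hypersurface_patch U X \<nu>"
    and "\<forall>x\<in>U. \<exists>e::'n \<Rightarrow> real^'n. g_orthonormal X x e \<and> (\<forall>j. principal_vector X \<nu> x (e j)) \<and>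
           (\<Sum>j\<in>UNIV. nabla_h_eee X \<nu> x (e j) * dir_deriv (e j) (meanH X \<nu>) x)
             \<le> (real CARD('n) + 1) / (2 * real CARD('n)) * gradnorm2 X (meanH X \<nu>) x"
  shows "\<forall>x\<in>U. normAcirc X \<nu> x \<noteq> 0 \<longrightarrow>
           t3norm2 X x (cov2 X (hcirc X \<nu>) x)
             \<ge> (1 + 1 / real CARD('n)) * gradnorm2 X (normAcirc X \<nu>) x"
proof (intro ballI impI)
  interpret smooth_patch U X \<nu> by (rule smooth_patch.intro) (rule assms(1))
  fix x assume x: "x \<in> U" and nonzero: "normAcirc X \<nu> x \<noteq> 0"
  obtain e where "g_orthonormal X x e" and "\<forall>j. principal_vector X \<nu> x (e j)"
    and "(\<Sum>j\<in>UNIV. nabla_h_eee X \<nu> x (e j) * dir_deriv (e j) (meanH X \<nu>) x)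
             \<le> (real CARD('n) + 1) / (2 * real CARD('n)) * gradnorm2 X (meanH X \<nu>) x"
    using assms(2) x by blast
  then show "t3norm2 X x (cov2 X (hcirc X \<nu>) x) \<ge> (1 + 1 / real CARD('n)) * gradnorm2 X (normAcirc X \<nu>) x"
    by (rule kato_at_point[OF x nonzero])
qed

end
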